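(* Consider the simple regression model $y_k=\beta x_k+\varepsilon_k$ ($k\geqslant1$), $\beta\in\mathbb{R}$, where $\{x_n,n\geqslant1\}$ is an arbitrary sequence of random variables and $\{\varepsilon_n,n\geqslant1\}$ is a sequence of pairwise PQD random variables stochastically dominated by a random variable $\varepsilon$ with $\mathbb{E}\varepsilon^2<\infty$ and \[ \sum_{1\leqslant k<j<\infty}\int_j^\infty t^{-2}\left[G_{\varepsilon_k^+,\varepsilon_j^+}(\sqrt t)+G_{\varepsilon_k^-,\varepsilon_j^-}(\sqrt t)\right]\mathrm{d}t<\infty . \] Let $\mathbf{x}_n=(x_1,\ldots,x_n)'$, $\mathbf{y}_n=(y_1,\ldots,y_n)'$, $\widehat\beta_n=\big(\sum_{j=1}^n x_j^2\big)^{-1}\mathbf{x}_n'\mathbf{y}_n$, $\widehat\sigma_n^2=(\mathbf{y}_n-\mathbf{x}_n\widehat\beta_n)'(\mathbf{y}_n-\mathbf{x}_n\widehat\beta_n)/(n-1)$, $\kappa=\widehat\sigma_n^2/\widehat\beta_n^2$, and the ridge estimator $\widehat\gamma_n=\big(\sum_{j=1}^n x_j^2+\kappa\big)^{-1}\mathbf{x}_n'\mathbf{y}_n$. If $\sum_{j=1}^n x_j^2\neq0$ a.s. for some $n\geqslant1$ and $\big(\sum_{j=1}^n x_j^2\big)^{-1}=o(n^{-1})$ a.s., then $\widehat\gamma_n\to\beta$ almost surely.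
   Context: $Z^+=\max(Z,0)$, $Z^-=\max(-Z,0)$. A sequence $\{\varepsilon_n\}$ is pairwise PQD if $\mathbb{P}\{\varepsilon_k\leqslant x,\varepsilon_j\leqslant y\}-\mathbb{P}\{\varepsilon_k\leqslant x\}\mathbb{P}\{\varepsilon_j\leqslant y\}\geqslant0$ for all reals $x,y$ and all $k\neq j$. $\{\varepsilon_n\}$ is stochastically dominated by $\varepsilon$ if there is $C>0$ with $\sup_n\mathbb{P}\{|\varepsilon_n|>t\}\leqslant C\,\mathbb{P}\{|\varepsilon|>t\}$ for all $t>0$. For random variables $X,Y$ and $t>0$, $g_t(s)=\max(\min(s,t),-t)$, $\Delta_{X,Y}(x,y)=\mathbb{P}\{X\leqslant x,Y\leqslant y\}-\mathbb{P}\{X\leqslant x\}\mathbb{P}\{Y\leqslant y\}$, and $G_{X,Y}(t)=\mathrm{Cov}(g_t(X),g_t(Y))=\int_{-t}^t\int_{-t}^t\Delta_{X,Y}(x,y)\,\mathrm{d}x\,\mathrm{d}y$. *)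

theory Defs
  imports "HOL-Probability.Probability" "HOL-Library.Landau_Symbols"
begin

definition pos_part :: "real \<Rightarrow> real" where
  "pos_part z = max z 0"

definition neg_part :: "real \<Rightarrow> real" where
  "neg_part z = max (- z) 0"

definition trunc :: "real \<Rightarrow> real \<Rightarrow> real" where
  "trunc t s = max (min s t) (- t)"

definition Cov :: "'a measure \<Rightarrow> ('a \<Rightarrow> real) \<Rightarrow> ('a \<Rightarrow> real) \<Rightarrow> real" where
  "Cov M X Y = (\<integral>w. X w * Y w \<partial>M) - (\<integral>w. X w \<partial>M) * (\<integral>w. Y w \<partial>M)"

definition Gfun :: "'a measure \<Rightarrow> ('a \<Rightarrow> real) \<Rightarrow> ('a \<Rightarrow> real) \<Rightarrow> real \<Rightarrow> real" where
  "Gfun M X Y t = Cov M (\<lambda>w. trunc t (X w)) (\<lambda>w. trunc t (Y w))"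

definition pairwise_PQD :: "'a measure \<Rightarrow> (nat \<Rightarrow> 'a \<Rightarrow> real) \<Rightarrow> bool" where
  "pairwise_PQD M e \<longleftrightarrow>
     (\<forall>k j a b. 1 \<le> k \<longrightarrow> 1 \<le> j \<longrightarrow> k \<noteq> j \<longrightarrow>
        measure M {w \<in> space M. e k w \<le> a \<and> e j w \<le> b}
        - measure M {w \<in> space M. e k w \<le> a} * measure M {w \<in> space M. e j w \<le> b} \<ge> 0)"

definition stoch_dominated :: "'a measure \<Rightarrow> (nat \<Rightarrow> 'a \<Rightarrow> real) \<Rightarrow> ('a \<Rightarrow> real) \<Rightarrow> bool" where
  "stoch_dominated M e d \<longleftrightarrow>
     (\<exists>C>0. \<forall>n t. 1 \<le> n \<longrightarrow> t > 0 \<longrightarrow>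
        measure M {w \<in> space M. \<bar>e n w\<bar> > t} \<le> C * measure M {w \<in> space M. \<bar>d w\<bar> > t})"

definition Sxx :: "(nat \<Rightarrow> 'a \<Rightarrow> real) \<Rightarrow> nat \<Rightarrow> 'a \<Rightarrow> real" where
  "Sxx x n w = (\<Sum>j = 1..n. (x j w)\<^sup>2)"

definition Sxy :: "(nat \<Rightarrow> 'a \<Rightarrow> real) \<Rightarrow> (nat \<Rightarrow> 'a \<Rightarrow> real) \<Rightarrow> nat \<Rightarrow> 'a \<Rightarrow> real" where
  "Sxy x y n w = (\<Sum>j = 1..n. x j w * y j w)"

definition beta_hat :: "(nat \<Rightarrow> 'a \<Rightarrow> real) \<Rightarrow> (nat \<Rightarrow> 'a \<Rightarrow> real) \<Rightarrow> nat \<Rightarrow> 'a \<Rightarrow> real" where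
  "beta_hat x y n w = inverse (Sxx x n w) * Sxy x y n w"

definition sigma2_hat :: "(nat \<Rightarrow> 'a \<Rightarrow> real) \<Rightarrow> (nat \<Rightarrow> 'a \<Rightarrow> real) \<Rightarrow> nat \<Rightarrow> 'a \<Rightarrow> real" where
  "sigma2_hat x y n w =
     (\<Sum>j = 1..n. (y j w - x j w * beta_hat x y n w)\<^sup>2) / (real n - 1)"

definition gamma_hat :: "(nat \<Rightarrow> 'a \<Rightarrow> real) \<Rightarrow> (nat \<Rightarrow> 'a \<Rightarrow> real) \<Rightarrow> nat \<Rightarrow> 'a \<Rightarrow> real" where
  "gamma_hat x y n w =
     (let \<kappa> = sigma2_hat x y n w / (beta_hat x y n w)\<^sup>2
      in inverse (Sxx x n w + \<kappa>) * Sxy x y n w)"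

end

theory Submission
  imports Defs
begin

lemma ridge_penalty_eventually_bounded:
  fixes b \<sigma> :: "nat \<Rightarrow> real"
  assumes b: "b \<longlonglongrightarrow> \<beta>" "\<beta> \<noteq> 0" and \<sigma>: "eventually (\<lambda>n. 0 \<le> \<sigma> n \<and> \<sigma> n \<le> K) sequentially"
  shows "eventually (\<lambda>n. \<bar>\<sigma> n / (b n)\<^sup>2\<bar> \<le> 4 * K / \<beta>\<^sup>2) sequentially"
proof -
  have "eventually (\<lambda>n. \<bar>\<beta>\<bar> / 2 < \<bar>b n\<bar>) sequentially"
    using tendsto_rabs[OF b(1)] b(2) by (intro order_tendstoD) auto
  then show ?thesis
    using \<sigma>
  proof eventually_elim
    case (elim n)
    then have "\<beta>\<^sup>2 / 4 \<le> (b n)\<^sup>2"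
      using power_mono[of "\<bar>\<beta>\<bar> / 2" "\<bar>b n\<bar>" 2] by (simp add: power_divide)
    then have "\<sigma> n / (b n)\<^sup>2 \<le> K / (\<beta>\<^sup>2 / 4)"
      using elim b(2) by (intro frac_le) auto
    then show ?case
      using elim by (simp add: mult.commute)
  qed
qed

lemma ridge_shrinkage_tendsto:
  fixes b s \<sigma> :: "nat \<Rightarrow> real"
  assumes b: "b \<longlonglongrightarrow> \<beta>" and s: "filterlim s at_top sequentially"
    and \<sigma>: "eventually (\<lambda>n. 0 \<le> \<sigma> n \<and> \<sigma> n \<le> K) sequentially"
  shows "(\<lambda>n. b n * s n / (s n + \<sigma> n / (b n)\<^sup>2)) \<longlonglongrightarrow> \<beta>"
proof -
  define \<kappa> where "\<kappa> n = \<sigma> n / (b n)\<^sup>2" for n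
  have "eventually (\<lambda>n. 0 < s n) sequentially"
    using s unfolding filterlim_at_top_dense by blast
  then have ev: "eventually (\<lambda>n. 0 < s n \<and> 0 \<le> \<kappa> n) sequentially"
    using \<sigma> by eventually_elim (simp add: \<kappa>_def)
  show ?thesis
  proof (cases "\<beta> = 0")
    case True
    have "(\<lambda>n. b n * s n / (s n + \<kappa> n)) \<longlonglongrightarrow> 0"
    proof (rule Lim_null_comparison)
      show "eventually (\<lambda>n. norm (b n * s n / (s n + \<kappa> n)) \<le> \<bar>b n\<bar>) sequentially"
        using ev by eventually_elim (simp add: abs_mult abs_divide divide_le_eq mult_left_mono)
      show "(\<lambda>n. \<bar>b n\<bar>) \<longlonglongrightarrow> 0"
        using b True by (simp add: tendsto_rabs_zero)
    qed
    then show ?thesis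
      using True unfolding \<kappa>_def by simp
  next
    case False
    define K' where "K' = 4 * K / \<beta>\<^sup>2"
    have "eventually (\<lambda>n. norm (\<kappa> n / s n) \<le> K' / s n) sequentially"
      using ev ridge_penalty_eventually_bounded[OF b False \<sigma>] unfolding \<kappa>_def[symmetric] K'_def[symmetric]
      by eventually_elim (simp add: abs_divide divide_right_mono)
    moreover have "(\<lambda>n. K' / s n) \<longlonglongrightarrow> 0"
      by (rule tendsto_divide_0[OF tendsto_const filterlim_at_top_imp_at_infinity[OF s]])
    ultimately have "(\<lambda>n. \<kappa> n / s n) \<longlonglongrightarrow> 0"
      by (rule Lim_null_comparison)
    then have "(\<lambda>n. b n / (1 + \<kappa> n / s n)) \<longlonglongrightarrow> \<beta> / (1 + 0)"
      by (intro tendsto_intros b) auto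
    moreover have "eventually (\<lambda>n. b n / (1 + \<kappa> n / s n) = b n * s n / (s n + \<kappa> n)) sequentially"
      using ev by eventually_elim (simp add: field_simps)
    ultimately show ?thesis
      unfolding \<kappa>_def by (simp add: Lim_transform_eventually)
  qed
qed

lemma Sxx_nonneg: "0 \<le> Sxx x n w"
  unfolding Sxx_def by (simp add: sum_nonneg)

lemma Sxx_mono: "m \<le> n \<Longrightarrow> Sxx x m w \<le> Sxx x n w"
  unfolding Sxx_def by (intro sum_mono2) auto

lemma Sxx_growth:
  assumes "Sxx x m w \<noteq> 0" and "(\<lambda>n. inverse (Sxx x n w)) \<in> o(\<lambda>n. inverse (real n))"
  shows "(\<lambda>n. real n / Sxx x n w) \<longlonglongrightarrow> 0" and "filterlim (\<lambda>n. Sxx x n w) at_top sequentially"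
proof -
  show lim: "(\<lambda>n. real n / Sxx x n w) \<longlonglongrightarrow> 0"
    using smalloD_tendsto[OF assms(2)] by (simp add: divide_inverse mult.commute)
  have pos: "0 < Sxx x m w"
    using assms(1) Sxx_nonneg[of x m w] by linarith
  have "eventually (\<lambda>n. 0 < Sxx x n w \<and> real n / Sxx x n w < 1) sequentially"
    using eventually_ge_at_top[of m] order_tendstoD(2)[OF lim zero_less_one]
    by eventually_elim (use pos Sxx_mono[of m _ x w] in \<open>auto intro: less_le_trans\<close>)
  then have "eventually (\<lambda>n. real n \<le> Sxx x n w) sequentially"
    by eventually_elim (auto simp: divide_less_eq)
  then show "filterlim (\<lambda>n. Sxx x n w) at_top sequentially"
    by (rule filterlim_at_top_mono[OF filterlim_real_sequentially])
qed

lemma gamma_hat_eq: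
  assumes "Sxx x n w \<noteq> 0"
  shows "gamma_hat x y n w
    = beta_hat x y n w * Sxx x n w / (Sxx x n w + sigma2_hat x y n w / (beta_hat x y n w)\<^sup>2)"
proof -
  have "Sxy x y n w = beta_hat x y n w * Sxx x n w"
    using assms unfolding beta_hat_def by simp
  then show ?thesis
    unfolding gamma_hat_def Let_def by (simp add: divide_inverse mult.commute)
qed

context
  fixes x e y :: "nat \<Rightarrow> 'a \<Rightarrow> real" and \<beta> :: real and w :: 'a
  assumes model: "\<And>k. y k w = \<beta> * x k w + e k w"
begin

lemma Sxy_model: "Sxy x y n w = \<beta> * Sxx x n w + (\<Sum>j = 1..n. x j w * e j w)"
  unfolding Sxy_def Sxx_def model by (simp add: algebra_simps sum.distrib sum_distrib_left power2_eq_square)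

lemma beta_hat_model: "Sxx x n w \<noteq> 0 \<Longrightarrow> beta_hat x y n w = \<beta> + (\<Sum>j = 1..n. x j w * e j w) / Sxx x n w"
  unfolding beta_hat_def Sxy_model by (simp add: field_simps)

lemma residual_sum_le:
  assumes "Sxx x n w \<noteq> 0"
  shows "(\<Sum>j = 1..n. (y j w - x j w * beta_hat x y n w)\<^sup>2) \<le> (\<Sum>j = 1..n. (e j w)\<^sup>2)"
proof -
  define s where "s = Sxx x n w"
  define q where "q = (\<Sum>j = 1..n. x j w * e j w)"
  define c where "c = q / s"
  have "(\<Sum>j = 1..n. (y j w - x j w * beta_hat x y n w)\<^sup>2)
      = (\<Sum>j = 1..n. (e j w)\<^sup>2 - 2 * c * (x j w * e j w) + c\<^sup>2 * (x j w)\<^sup>2)"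
    unfolding beta_hat_model[OF assms] model c_def q_def s_def
    by (intro sum.cong refl) (simp add: power2_eq_square algebra_simps)
  also have "\<dots> = (\<Sum>j = 1..n. (e j w)\<^sup>2) - 2 * c * q + c\<^sup>2 * s"
    unfolding q_def s_def Sxx_def by (simp add: sum.distrib sum_subtractf sum_distrib_left)
  also have "\<dots> = (\<Sum>j = 1..n. (e j w)\<^sup>2) - q\<^sup>2 / s"
    using assms unfolding c_def s_def by (simp add: field_simps power2_eq_square)
  also have "\<dots> \<le> (\<Sum>j = 1..n. (e j w)\<^sup>2)"
    unfolding s_def using Sxx_nonneg[of x n w] by simp
  finally show ?thesis .
qed

lemma sigma2_hat_bounds:
  assumes "Sxx x n w \<noteq> 0" "2 \<le> n" "(\<Sum>j = 1..n. (e j w)\<^sup>2) \<le> B * real n"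
  shows "0 \<le> sigma2_hat x y n w" "sigma2_hat x y n w \<le> 2 * B"
proof -
  define R where "R = (\<Sum>j = 1..n. (y j w - x j w * beta_hat x y n w)\<^sup>2)"
  have "0 \<le> R" "R \<le> B * real n"
    unfolding R_def using residual_sum_le[OF assms(1)] assms(3) by (auto intro: sum_nonneg)
  moreover have "0 \<le> B"
  proof -
    have "0 \<le> B * real n"
      using \<open>0 \<le> R\<close> \<open>R \<le> B * real n\<close> by linarith
    then show ?thesis
      using assms(2) by (simp add: zero_le_mult_iff)
  qed
  moreover have "B * real n \<le> 2 * B * (real n - 1)"
    using \<open>0 \<le> B\<close> assms(2) by (simp add: algebra_simps mult_left_mono)
  ultimately show "0 \<le> sigma2_hat x y n w" "sigma2_hat x y n w \<le> 2 * B"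
    unfolding sigma2_hat_def R_def[symmetric] using assms(2) by (simp_all add: divide_le_eq)
qed

lemma beta_hat_tendsto:
  assumes e_bound: "\<And>n. 1 \<le> n \<Longrightarrow> (\<Sum>j = 1..n. (e j w)\<^sup>2) \<le> B * real n"
    and "Sxx x m w \<noteq> 0" and growth: "(\<lambda>n. inverse (Sxx x n w)) \<in> o(\<lambda>n. inverse (real n))"
  shows "(\<lambda>n. beta_hat x y n w) \<longlonglongrightarrow> \<beta>"
proof -
  define s where "s n = Sxx x n w" for n
  define q where "q n = (\<Sum>j = 1..n. x j w * e j w)" for n
  have pos: "eventually (\<lambda>n. 1 \<le> n \<and> 0 < s n) sequentially"
    using Sxx_growth(2)[OF assms(2,3)] unfolding s_def filterlim_at_top_dense
    by (auto intro: eventually_conj eventually_ge_at_top)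
  have "eventually (\<lambda>n. norm (q n / s n) \<le> sqrt (B * (real n / s n))) sequentially"
    using pos
  proof eventually_elim
    case (elim n)
    have "(q n)\<^sup>2 \<le> s n * (\<Sum>j = 1..n. (e j w)\<^sup>2)"
      unfolding q_def s_def Sxx_def by (rule Cauchy_Schwarz_ineq_sum)
    also have "\<dots> \<le> s n * (B * real n)"
      using e_bound[of n] elim by (intro mult_left_mono) auto
    finally have "(q n / s n)\<^sup>2 \<le> s n * (B * real n) / (s n)\<^sup>2"
      by (simp add: power_divide divide_right_mono)
    also have "\<dots> = B * (real n / s n)"
      using elim by (simp add: power2_eq_square)
    finally have "(q n / s n)\<^sup>2 \<le> B * (real n / s n)" .
    then show ?case
      by (metis power2_abs real_le_rsqrt real_norm_def)
  qed
  moreover have "(\<lambda>n. sqrt (B * (real n / s n))) \<longlonglongrightarrow> 0"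
    using tendsto_real_sqrt[OF tendsto_mult_right_zero[OF Sxx_growth(1)[OF assms(2,3)], of B]]
    unfolding s_def by simp
  ultimately have "(\<lambda>n. q n / s n) \<longlonglongrightarrow> 0"
    by (rule Lim_null_comparison)
  then have "(\<lambda>n. \<beta> + q n / s n) \<longlonglongrightarrow> \<beta> + 0"
    by (intro tendsto_add tendsto_const)
  moreover have "eventually (\<lambda>n. \<beta> + q n / s n = beta_hat x y n w) sequentially"
    using pos by eventually_elim (simp add: beta_hat_model q_def s_def)
  ultimately show ?thesis
    by (simp add: Lim_transform_eventually)
qed

lemma gamma_hat_tendsto:
  assumes e_bound: "\<And>n. 1 \<le> n \<Longrightarrow> (\<Sum>j = 1..n. (e j w)\<^sup>2) \<le> B * real n"
    and "Sxx x m w \<noteq> 0" and growth: "(\<lambda>n. inverse (Sxx x n w)) \<in> o(\<lambda>n. inverse (real n))"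
  shows "(\<lambda>n. gamma_hat x y n w) \<longlonglongrightarrow> \<beta>"
proof -
  have pos: "eventually (\<lambda>n. 2 \<le> n \<and> 0 < Sxx x n w) sequentially"
    using Sxx_growth(2)[OF assms(2,3)] unfolding filterlim_at_top_dense
    by (auto intro: eventually_conj eventually_ge_at_top)
  then have "eventually (\<lambda>n. 0 \<le> sigma2_hat x y n w \<and> sigma2_hat x y n w \<le> 2 * B) sequentially"
  proof eventually_elim
    case (elim n)
    then have "(\<Sum>j = 1..n. (e j w)\<^sup>2) \<le> B * real n"
      using e_bound by simp
    then show ?case
      using sigma2_hat_bounds[of n B] elim by simp
  qed
  with beta_hat_tendsto[OF assms] Sxx_growth(2)[OF assms(2,3)]
  have "(\<lambda>n. beta_hat x y n w * Sxx x n w / (Sxx x n w + sigma2_hat x y n w / (beta_hat x y n w)\<^sup>2))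
      \<longlonglongrightarrow> \<beta>"
    by (rule ridge_shrinkage_tendsto)
  moreover have "eventually (\<lambda>n. beta_hat x y n w * Sxx x n w / (Sxx x n w + sigma2_hat x y n w / (beta_hat x y n w)\<^sup>2)
      = gamma_hat x y n w) sequentially"
    using pos by eventually_elim (simp add: gamma_hat_eq)
  ultimately show ?thesis
    by (simp add: Lim_transform_eventually)
qed

end

lemma (in finite_measure) abs_integral_le_const:
  fixes f :: "'a \<Rightarrow> real"
  assumes "\<And>x. \<bar>f x\<bar> \<le> B"
  shows "\<bar>\<integral>x. f x \<partial>M\<bar> \<le> B * measure M (space M)"
proof (cases "integrable M f")
  case True
  have "\<bar>\<integral>x. f x \<partial>M\<bar> \<le> (\<integral>x. \<bar>f x\<bar> \<partial>M)"
    by (rule integral_abs_bound)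
  also have "\<dots> \<le> (\<integral>x. B \<partial>M)"
    using True assms by (intro integral_mono) auto
  finally show ?thesis by (simp add: mult.commute)
next
  case False
  then show ?thesis using assms[of undefined] by (simp add: not_integrable_integral_eq)
qed

lemma (in prob_space) abs_expectation_le_const:
  fixes f :: "'a \<Rightarrow> real"
  assumes "\<And>x. \<bar>f x\<bar> \<le> B"
  shows "\<bar>\<integral>x. f x \<partial>M\<bar> \<le> B"
  using abs_integral_le_const[OF assms] by (simp add: prob_space)

lemma (in finite_measure) integrable_bounded:
  fixes f :: "'a \<Rightarrow> real"
  assumes "f \<in> borel_measurable M" "\<And>x. \<bar>f x\<bar> \<le> B"
  shows "integrable M f"
  using assms by (intro integrable_const_bound[where B=B]) auto

lemma Fubini_integral_bounded:
  fixes f :: "'a \<Rightarrow> 'b \<Rightarrow> real"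
  assumes "finite_measure M1" "finite_measure M2"
    and "case_prod f \<in> borel_measurable (M1 \<Otimes>\<^sub>M M2)" "\<And>x y. \<bar>f x y\<bar> \<le> B"
  shows "(\<integral>y. (\<integral>x. f x y \<partial>M1) \<partial>M2) = (\<integral>x. (\<integral>y. f x y \<partial>M2) \<partial>M1)"
proof -
  interpret M1: finite_measure M1 by fact
  interpret M2: finite_measure M2 by fact
  interpret pair_sigma_finite M1 M2 ..
  interpret M12: finite_measure "M1 \<Otimes>\<^sub>M M2"
    by (rule finite_measure_pair_measure) unfold_locales
  show ?thesis
    by (rule Fubini_integral, rule M12.integrable_bounded[where B=B]) (use assms in auto)
qed

definition lborel_Icc :: "real \<Rightarrow> real measure" where
  "lborel_Icc R = density lborel (\<lambda>x. ennreal (indicator {0..R} x))"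

lemma space_lborel_Icc [simp]: "space (lborel_Icc R) = UNIV"
  by (simp add: lborel_Icc_def)

lemma sets_lborel_Icc [simp, measurable_cong]: "sets (lborel_Icc R) = sets borel"
  by (simp add: lborel_Icc_def)

lemma finite_measure_lborel_Icc: "finite_measure (lborel_Icc R)"
proof (rule finite_measureI)
  have "emeasure (lborel_Icc R) (space (lborel_Icc R)) = emeasure lborel {0..R}"
    unfolding lborel_Icc_def by (simp add: emeasure_density ennreal_indicator)
  then show "emeasure (lborel_Icc R) (space (lborel_Icc R)) \<noteq> \<infinity>"
    by (cases "0 \<le> R") auto
qed

lemma integral_lborel_Icc:
  "(f :: real \<Rightarrow> real) \<in> borel_measurable borel \<Longrightarrow>
    (\<integral>x. f x \<partial>lborel_Icc R) = (\<integral>x. indicator {0..R} x * f x \<partial>lborel)"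
  unfolding lborel_Icc_def by (simp add: integral_density mult.commute)

lemma test1: "(\<lambda>(s,w). f s * g w :: real) \<in> borel_measurable (lborel_Icc R \<Otimes>\<^sub>M M)" if [measurable]: "f \<in> borel_measurable borel" "g \<in> borel_measurable M"
  by measurable

lemma abs_mult_le_mult: "\<bar>x\<bar> \<le> A \<Longrightarrow> \<bar>y\<bar> \<le> B \<Longrightarrow> \<bar>x * y\<bar> \<le> A * (B :: real)"
  by (simp add: abs_mult mult_mono')

lemma expectation_integral_kernel_mult:
  fixes N :: "'b measure" and M :: "'a measure" and I :: "'b \<Rightarrow> 'a \<Rightarrow> real"
  assumes N: "finite_measure N" and M: "prob_space M"
    and [measurable]: "a \<in> borel_measurable N" "case_prod I \<in> borel_measurable (N \<Otimes>\<^sub>M M)"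
      "Z \<in> borel_measurable M"
    and "\<And>s. \<bar>a s\<bar> \<le> A" "\<And>s w. \<bar>I s w\<bar> \<le> 1" "\<And>w. \<bar>Z w\<bar> \<le> C"
  shows "(\<integral>w. (\<integral>s. a s * I s w \<partial>N) * Z w \<partial>M) = (\<integral>s. a s * (\<integral>w. I s w * Z w \<partial>M) \<partial>N)"
proof -
  interpret M: prob_space M by fact
  have "(\<integral>w. (\<integral>s. a s * I s w \<partial>N) * Z w \<partial>M) = (\<integral>w. (\<integral>s. a s * I s w * Z w \<partial>N) \<partial>M)"
    by simp
  also have "\<dots> = (\<integral>s. (\<integral>w. a s * I s w * Z w \<partial>M) \<partial>N)"
    by (rule Fubini_integral_bounded[OF N M.finite_measure_axioms, where B="A * 1 * C"])
      (measurable, intro abs_mult_le_mult assms)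
  finally show ?thesis
    by (simp add: mult.assoc)
qed

lemma Cov_integral_kernel_left:
  fixes N :: "'b measure" and M :: "'a measure" and I :: "'b \<Rightarrow> 'a \<Rightarrow> real"
  assumes N: "finite_measure N" and M: "prob_space M"
    and [measurable]: "a \<in> borel_measurable N" "case_prod I \<in> borel_measurable (N \<Otimes>\<^sub>M M)"
      "Z \<in> borel_measurable M"
    and a_bound: "\<And>s. \<bar>a s\<bar> \<le> A" and I_bound: "\<And>s w. \<bar>I s w\<bar> \<le> 1"
    and Z_bound: "\<And>w. \<bar>Z w\<bar> \<le> C"
  shows "Cov M (\<lambda>w. \<integral>s. a s * I s w \<partial>N) Z = (\<integral>s. a s * Cov M (I s) Z \<partial>N)"
    and "integrable N (\<lambda>s. a s * Cov M (I s) Z)"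
proof -
  interpret N: finite_measure N by fact
  interpret M: prob_space M by fact
  note [measurable] = M.borel_measurable_lebesgue_integral
  note kernel_mult = expectation_integral_kernel_mult[OF N M assms(3,4) _ a_bound I_bound]
  have EIZ: "integrable N (\<lambda>s. a s * (\<integral>w. I s w * Z w \<partial>M))"
    by (rule N.integrable_bounded[where B="A * (1 * C)"])
      (measurable, intro abs_mult_le_mult a_bound M.abs_expectation_le_const I_bound Z_bound)
  have "integrable N (\<lambda>s. a s * (\<integral>w. I s w \<partial>M))"
    by (rule N.integrable_bounded[where B="A * 1"])
      (measurable, intro abs_mult_le_mult a_bound M.abs_expectation_le_const I_bound)
  then have EIEZ: "integrable N (\<lambda>s. a s * (\<integral>w. I s w \<partial>M) * (\<integral>w. Z w \<partial>M))"
    by (rule Bochner_Integration.integrable_mult_left)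
  have eq: "a s * Cov M (I s) Z = a s * (\<integral>w. I s w * Z w \<partial>M) - a s * (\<integral>w. I s w \<partial>M) * (\<integral>w. Z w \<partial>M)" for s
    unfolding Cov_def by (simp add: right_diff_distrib mult.assoc)
  show "integrable N (\<lambda>s. a s * Cov M (I s) Z)"
    unfolding eq using EIZ EIEZ by (rule Bochner_Integration.integrable_diff)
  have "Cov M (\<lambda>w. \<integral>s. a s * I s w \<partial>N) Z
      = (\<integral>s. a s * (\<integral>w. I s w * Z w \<partial>M) \<partial>N) - (\<integral>s. a s * (\<integral>w. I s w \<partial>M) \<partial>N) * (\<integral>w. Z w \<partial>M)"
    unfolding Cov_def using kernel_mult[OF assms(5) Z_bound] kernel_mult[of "\<lambda>_. 1" 1] by simp
  also have "\<dots> = (\<integral>s. a s * Cov M (I s) Z \<partial>N)"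
    unfolding eq Bochner_Integration.integral_diff[OF EIZ EIEZ] by simp
  finally show "Cov M (\<lambda>w. \<integral>s. a s * I s w \<partial>N) Z = (\<integral>s. a s * Cov M (I s) Z \<partial>N)" .
qed

lemma Cov_commute: "Cov M X Y = Cov M Y X"
  unfolding Cov_def by (simp add: mult.commute)

lemma Cov_integral_kernel:
  fixes N :: "'b measure" and M :: "'a measure" and I J :: "'b \<Rightarrow> 'a \<Rightarrow> real"
  assumes N: "finite_measure N" and M: "prob_space M"
    and a: "a \<in> borel_measurable N" "\<And>s. \<bar>a s\<bar> \<le> A"
    and b: "b \<in> borel_measurable N" "\<And>r. \<bar>b r\<bar> \<le> B"
    and I: "case_prod I \<in> borel_measurable (N \<Otimes>\<^sub>M M)" "\<And>s w. \<bar>I s w\<bar> \<le> 1"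
    and J: "case_prod J \<in> borel_measurable (N \<Otimes>\<^sub>M M)" "\<And>r w. \<bar>J r w\<bar> \<le> 1"
  shows "Cov M (\<lambda>w. \<integral>s. a s * I s w \<partial>N) (\<lambda>w. \<integral>r. b r * J r w \<partial>N)
           = (\<integral>s. (\<integral>r. a s * b r * Cov M (I s) (J r) \<partial>N) \<partial>N)"
    and "integrable N (\<lambda>s. \<integral>r. a s * b r * Cov M (I s) (J r) \<partial>N)"
    and "s \<in> space N \<Longrightarrow> integrable N (\<lambda>r. a s * b r * Cov M (I s) (J r))"
proof -
  interpret N: finite_measure N by fact
  interpret M: prob_space M by fact
  note [measurable] = a(1) b(1) I(1) J(1) N.borel_measurable_lebesgue_integral
  define Y where "Y = (\<lambda>w. \<integral>r. b r * J r w \<partial>N)"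
  have Y: "Y \<in> borel_measurable M"
    unfolding Y_def by measurable
  have Y_bound: "\<bar>Y w\<bar> \<le> B * measure N (space N)" for w
    unfolding Y_def using abs_mult_le_mult[OF b(2) J(2)] by (simp add: N.abs_integral_le_const)
  note left = Cov_integral_kernel_left[OF N M a(1) I(1) Y a(2) I(2) Y_bound]
  have inner: "a s * Cov M (I s) Y = (\<integral>r. a s * b r * Cov M (I s) (J r) \<partial>N)"
    and inner_integrable: "integrable N (\<lambda>r. a s * b r * Cov M (I s) (J r))"
    if "s \<in> space N" for s
  proof -
    have Is: "I s \<in> borel_measurable M"
      using that by measurable
    note right = Cov_integral_kernel_left[OF N M b(1) J(1) Is b(2) J(2) I(2)[of s]]
    show "a s * Cov M (I s) Y = (\<integral>r. a s * b r * Cov M (I s) (J r) \<partial>N)"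
      using right(1) by (simp add: Y_def Cov_commute[of M "I s"] mult.assoc)
    show "integrable N (\<lambda>r. a s * b r * Cov M (I s) (J r))"
      using right(2) by (simp add: Cov_commute[of M "I s"] mult.assoc)
  qed
  show "integrable N (\<lambda>s. \<integral>r. a s * b r * Cov M (I s) (J r) \<partial>N)"
    using left(2) by (rule Bochner_Integration.integrable_cong[THEN iffD1, OF refl, rotated]) (simp add: inner)
  show "s \<in> space N \<Longrightarrow> integrable N (\<lambda>r. a s * b r * Cov M (I s) (J r))"
    by (rule inner_integrable)
  show "Cov M (\<lambda>w. \<integral>s. a s * I s w \<partial>N) (\<lambda>w. \<integral>r. b r * J r w \<partial>N)
      = (\<integral>s. (\<integral>r. a s * b r * Cov M (I s) (J r) \<partial>N) \<partial>N)"
    unfolding Y_def[symmetric] left(1) by (rule Bochner_Integration.integral_cong) (simp_all add: inner)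
qed

lemma Cov_integral_kernel_mono:
  fixes N :: "'b measure" and M :: "'a measure" and I J :: "'b \<Rightarrow> 'a \<Rightarrow> real"
  assumes N: "finite_measure N" and M: "prob_space M"
    and a: "a \<in> borel_measurable N" "a' \<in> borel_measurable N" "\<And>s. 0 \<le> a s" "\<And>s. a s \<le> a' s"
      "\<And>s. a' s \<le> A"
    and b: "b \<in> borel_measurable N" "b' \<in> borel_measurable N" "\<And>r. 0 \<le> b r" "\<And>r. b r \<le> b' r"
      "\<And>r. b' r \<le> B"
    and I: "case_prod I \<in> borel_measurable (N \<Otimes>\<^sub>M M)" "\<And>s w. \<bar>I s w\<bar> \<le> 1"
    and J: "case_prod J \<in> borel_measurable (N \<Otimes>\<^sub>M M)" "\<And>r w. \<bar>J r w\<bar> \<le> 1"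
    and Cov_nonneg: "\<And>s r. 0 \<le> Cov M (I s) (J r)"
  shows "Cov M (\<lambda>w. \<integral>s. a s * I s w \<partial>N) (\<lambda>w. \<integral>r. b r * J r w \<partial>N)
    \<le> Cov M (\<lambda>w. \<integral>s. a' s * I s w \<partial>N) (\<lambda>w. \<integral>r. b' r * J r w \<partial>N)"
proof -
  have bounds: "\<bar>a s\<bar> \<le> A" "\<bar>a' s\<bar> \<le> A" "\<bar>b s\<bar> \<le> B" "\<bar>b' s\<bar> \<le> B" for s
    using a(3-5)[of s] b(3-5)[of s] by auto
  note lhs = Cov_integral_kernel[OF N M a(1) bounds(1) b(1) bounds(3) I J]
  note rhs = Cov_integral_kernel[OF N M a(2) bounds(2) b(2) bounds(4) I J]
  have "a s * b r * Cov M (I s) (J r) \<le> a' s * b' r * Cov M (I s) (J r)" for s r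
    using a(3,4) b(3,4) Cov_nonneg by (intro mult_right_mono mult_mono) (auto intro: order_trans)
  then show ?thesis
    unfolding lhs(1) rhs(1) by (intro integral_mono lhs(2,3) rhs(2,3))
qed

lemma layer_cake_power:
  fixes u T R :: real
  assumes "0 \<le> u" "0 \<le> T" "T \<le> R"
  shows "(\<integral>s. indicator {0..T} s * s ^ n * indicator {..<u} s \<partial>lborel_Icc R) = (min u T) ^ (n + 1) / (n + 1)"
proof -
  define c where "c = min u T"
  have "0 \<le> c" using assms unfolding c_def by simp
  have "(\<integral>s. indicator {0..T} s * s ^ n * indicator {..<u} s \<partial>lborel_Icc R)
      = (\<integral>s. indicator {0..R} s * (indicator {0..T} s * s ^ n * indicator {..<u} s) \<partial>lborel)"
    by (rule integral_lborel_Icc) measurable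
  also have "\<dots> = (\<integral>s. s ^ n * indicator {0..c} s \<partial>lborel)"
    using assms unfolding c_def
    by (intro integral_cong_AE AE_mp[OF AE_lborel_singleton[of "min u T"] AE_I2])
      (auto simp: indicator_def)
  also have "\<dots> = c ^ (n + 1) / (n + 1)"
    using integral_power[OF \<open>0 \<le> c\<close>, of n] by simp
  finally show ?thesis unfolding c_def .
qed

lemma measurable_indicator_lessThan [measurable]:
  fixes U :: "'a \<Rightarrow> real"
  assumes [measurable]: "U \<in> borel_measurable M"
  shows "(\<lambda>(s, w). indicator {..<U w} s :: real) \<in> borel_measurable (borel \<Otimes>\<^sub>M M)"
proof -
  have "(\<lambda>(s, w). indicator {..<U w} s :: real) = (\<lambda>x. if fst x < U (snd x) then 1 else 0)"
    by (auto simp: indicator_def)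
  also have "\<dots> \<in> borel_measurable (borel \<Otimes>\<^sub>M M)"
  proof -
    have [measurable]: "{x \<in> space (borel \<Otimes>\<^sub>M M). fst x < U (snd x)} \<in> sets (borel \<Otimes>\<^sub>M M)"
      by (rule borel_measurable_less) measurable
    show ?thesis
      unfolding pred_def by measurable
  qed
  finally show ?thesis .
qed

lemma Cov_cmult: "Cov M (\<lambda>w. c * X w) (\<lambda>w. d * Y w) = c * d * Cov M X Y"
  unfolding Cov_def by (simp add: algebra_simps)

lemma min_eq_layer_integral:
  "0 \<le> u \<Longrightarrow> 0 \<le> T \<Longrightarrow> T \<le> R \<Longrightarrow>
    c * min u T = (\<integral>s. (c * indicator {0..T} s) * indicator {..<u} s \<partial>lborel_Icc R)"
  using layer_cake_power[of u T R 0] by (simp add: mult.assoc)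

lemma min_sq_eq_layer_integral:
  "0 \<le> u \<Longrightarrow> 0 \<le> T \<Longrightarrow> T \<le> R \<Longrightarrow>
    (min u T)\<^sup>2 = (\<integral>s. (2 * (indicator {0..T} s * s)) * indicator {..<u} s \<partial>lborel_Icc R)"
  using layer_cake_power[of u T R 1] by (simp add: mult.assoc power2_eq_square)

lemma (in prob_space) expectation_indicator_lessThan:
  fixes W :: "'a \<Rightarrow> real"
  assumes [measurable]: "W \<in> borel_measurable M"
  shows "(\<integral>w. indicator {..<W w} s \<partial>M) = prob {w \<in> space M. s < W w}"
proof -
  have "(\<integral>w. indicator {..<W w} s \<partial>M) = (\<integral>w. indicator {w \<in> space M. s < W w} w \<partial>M :: real)"
    by (rule Bochner_Integration.integral_cong) (auto simp: indicator_def)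
  then show ?thesis by simp
qed

definition upper_PQD :: "'a measure \<Rightarrow> ('a \<Rightarrow> real) \<Rightarrow> ('a \<Rightarrow> real) \<Rightarrow> bool" where
  "upper_PQD M X Y \<longleftrightarrow> (\<forall>s r.
     measure M {w \<in> space M. s < X w} * measure M {w \<in> space M. r < Y w}
       \<le> measure M {w \<in> space M. s < X w \<and> r < Y w})"

locale nonneg_upper_PQD = prob_space M for M :: "'a measure" +
  fixes X Y :: "'a \<Rightarrow> real"
  assumes X_measurable [measurable]: "X \<in> borel_measurable M"
    and Y_measurable [measurable]: "Y \<in> borel_measurable M"
    and X_nonneg: "\<And>w. 0 \<le> X w" and Y_nonneg: "\<And>w. 0 \<le> Y w"
    and upper_PQD: "upper_PQD M X Y"
begin

lemma Cov_indicator_nonneg: "0 \<le> Cov M (\<lambda>w. indicator {..<X w} s) (\<lambda>w. indicator {..<Y w} r)"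
proof -
  have "(\<integral>w. indicator {..<X w} s * indicator {..<Y w} r \<partial>M)
      = (\<integral>w. indicator {w \<in> space M. s < X w \<and> r < Y w} w \<partial>M :: real)"
    by (rule Bochner_Integration.integral_cong) (auto simp: indicator_def)
  then show ?thesis
    using upper_PQD unfolding Cov_def upper_PQD_def by (simp add: expectation_indicator_lessThan)
qed

lemma Cov_layer_integral_mono:
  assumes "a \<in> borel_measurable borel" "a' \<in> borel_measurable borel"
    "\<And>s. 0 \<le> a s" "\<And>s. a s \<le> a' s" "\<And>s. a' s \<le> A"
    and "b \<in> borel_measurable borel" "b' \<in> borel_measurable borel"
    "\<And>r. 0 \<le> b r" "\<And>r. b r \<le> b' r" "\<And>r. b' r \<le> B"
  shows "Cov M (\<lambda>w. \<integral>s. a s * indicator {..<X w} s \<partial>lborel_Icc R) (\<lambda>w. \<integral>r. b r * indicator {..<Y w} r \<partial>lborel_Icc R)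
    \<le> Cov M (\<lambda>w. \<integral>s. a' s * indicator {..<X w} s \<partial>lborel_Icc R) (\<lambda>w. \<integral>r. b' r * indicator {..<Y w} r \<partial>lborel_Icc R)"
  using assms
  by (intro Cov_integral_kernel_mono[OF finite_measure_lborel_Icc prob_space_axioms] Cov_indicator_nonneg)
    (simp_all, measurable)

lemma min_eq_layer_integral_fun:
  "(\<And>w. 0 \<le> Z w) \<Longrightarrow> 0 \<le> T \<Longrightarrow> T \<le> R \<Longrightarrow>
    (\<lambda>w. c * min (Z w) T) = (\<lambda>w. \<integral>s. (c * indicator {0..T} s) * indicator {..<Z w} s \<partial>lborel_Icc R)"
  using min_eq_layer_integral by blast

lemma Cov_min_nonneg:
  assumes "0 \<le> T"
  shows "0 \<le> Cov M (\<lambda>w. min (X w) T) (\<lambda>w. min (Y w) T)"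
proof -
  have "Cov M (\<lambda>w. \<integral>s. 0 * indicator {..<X w} s \<partial>lborel_Icc T) (\<lambda>w. \<integral>r. 0 * indicator {..<Y w} r \<partial>lborel_Icc T)
      \<le> Cov M (\<lambda>w. \<integral>s. (1 * indicator {0..T} s) * indicator {..<X w} s \<partial>lborel_Icc T)
          (\<lambda>w. \<integral>r. (1 * indicator {0..T} r) * indicator {..<Y w} r \<partial>lborel_Icc T)"
    by (rule Cov_layer_integral_mono[where A=1 and B=1]) auto
  then show ?thesis
    unfolding min_eq_layer_integral_fun[OF X_nonneg assms order.refl, symmetric]
      min_eq_layer_integral_fun[OF Y_nonneg assms order.refl, symmetric]
    by (simp add: Cov_def)
qed

lemma Cov_min_mono:
  assumes "0 \<le> T" "T \<le> T'"
  shows "Cov M (\<lambda>w. min (X w) T) (\<lambda>w. min (Y w) T) \<le> Cov M (\<lambda>w. min (X w) T') (\<lambda>w. min (Y w) T')"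
proof -
  have "Cov M (\<lambda>w. \<integral>s. (1 * indicator {0..T} s) * indicator {..<X w} s \<partial>lborel_Icc T')
          (\<lambda>w. \<integral>r. (1 * indicator {0..T} r) * indicator {..<Y w} r \<partial>lborel_Icc T')
      \<le> Cov M (\<lambda>w. \<integral>s. (1 * indicator {0..T'} s) * indicator {..<X w} s \<partial>lborel_Icc T')
          (\<lambda>w. \<integral>r. (1 * indicator {0..T'} r) * indicator {..<Y w} r \<partial>lborel_Icc T')"
    using assms by (intro Cov_layer_integral_mono[where A=1 and B=1]) (auto simp: indicator_def)
  then show ?thesis
    unfolding min_eq_layer_integral_fun[OF X_nonneg assms, symmetric]
      min_eq_layer_integral_fun[OF Y_nonneg assms, symmetric]
      min_eq_layer_integral_fun[OF X_nonneg order_trans[OF assms] order.refl, symmetric]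
      min_eq_layer_integral_fun[OF Y_nonneg order_trans[OF assms] order.refl, symmetric]
    by simp
qed

lemma Cov_min_sq_le:
  assumes "0 \<le> T"
  shows "Cov M (\<lambda>w. (min (X w) T)\<^sup>2) (\<lambda>w. (min (Y w) T)\<^sup>2)
    \<le> 4 * T\<^sup>2 * Cov M (\<lambda>w. min (X w) T) (\<lambda>w. min (Y w) T)"
proof -
  have sq: "(\<lambda>w. (min (Z w) T)\<^sup>2) = (\<lambda>w. \<integral>s. (2 * (indicator {0..T} s * s)) * indicator {..<Z w} s \<partial>lborel_Icc T)"
    if "\<And>w. 0 \<le> Z w" for Z
    using min_sq_eq_layer_integral[OF that assms order.refl] by blast
  have "Cov M (\<lambda>w. \<integral>s. (2 * (indicator {0..T} s * s)) * indicator {..<X w} s \<partial>lborel_Icc T)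
          (\<lambda>w. \<integral>r. (2 * (indicator {0..T} r * r)) * indicator {..<Y w} r \<partial>lborel_Icc T)
      \<le> Cov M (\<lambda>w. \<integral>s. (2 * T * indicator {0..T} s) * indicator {..<X w} s \<partial>lborel_Icc T)
          (\<lambda>w. \<integral>r. (2 * T * indicator {0..T} r) * indicator {..<Y w} r \<partial>lborel_Icc T)"
    using assms by (intro Cov_layer_integral_mono[where A="2 * T" and B="2 * T"]) (auto simp: indicator_def)
  then show ?thesis
    unfolding sq[OF X_nonneg] sq[OF Y_nonneg]
      min_eq_layer_integral_fun[OF X_nonneg assms order.refl, symmetric]
      min_eq_layer_integral_fun[OF Y_nonneg assms order.refl, symmetric] Cov_cmult
    by (simp add: power2_eq_square)
qed

end

lemma (in prob_space) expectation_min_power_eq: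
  assumes [measurable]: "W \<in> borel_measurable M" and W_nonneg: "\<And>w. 0 \<le> W w" and "0 \<le> T"
  shows "(\<integral>w. (min (W w) T) ^ (n + 1) \<partial>M)
      = real (n + 1) * (\<integral>s. indicator {0..T} s * s ^ n * prob {w \<in> space M. s < W w} \<partial>lborel_Icc T)"
    and "integrable (lborel_Icc T) (\<lambda>s. indicator {0..T} s * s ^ n * prob {w \<in> space M. s < W w})"
proof -
  interpret N: finite_measure "lborel_Icc T" by (rule finite_measure_lborel_Icc)
  have a_bound: "\<bar>indicator {0..T} s * s ^ n\<bar> \<le> T ^ n" for s :: real
    using \<open>0 \<le> T\<close> by (auto simp: indicator_def power_mono)
  have "(\<integral>w. (\<integral>s. indicator {0..T} s * s ^ n * indicator {..<W w} s \<partial>lborel_Icc T) \<partial>M)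
      = (\<integral>s. (\<integral>w. indicator {0..T} s * s ^ n * indicator {..<W w} s \<partial>M) \<partial>lborel_Icc T)"
    by (rule Fubini_integral_bounded[OF N.finite_measure_axioms finite_measure_axioms, where B="T ^ n * 1"])
      (measurable, intro abs_mult_le_mult a_bound, simp add: indicator_def)
  moreover have "(min (W w) T) ^ (n + 1)
      = (n + 1) * (\<integral>s. indicator {0..T} s * s ^ n * indicator {..<W w} s \<partial>lborel_Icc T)" for w
    using layer_cake_power[OF W_nonneg \<open>0 \<le> T\<close> order.refl, where n=n] by simp
  ultimately show "(\<integral>w. (min (W w) T) ^ (n + 1) \<partial>M)
      = real (n + 1) * (\<integral>s. indicator {0..T} s * s ^ n * prob {w \<in> space M. s < W w} \<partial>lborel_Icc T)"
    by (simp add: expectation_indicator_lessThan)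
  show "integrable (lborel_Icc T) (\<lambda>s. indicator {0..T} s * s ^ n * prob {w \<in> space M. s < W w})"
    by (rule N.integrable_bounded[where B="T ^ n * 1"]) (measurable, intro abs_mult_le_mult a_bound, simp)
qed

lemma (in prob_space) expectation_min_power_le_dominated:
  assumes [measurable]: "U \<in> borel_measurable M" "V \<in> borel_measurable M"
    and "\<And>w. 0 \<le> U w" "\<And>w. 0 \<le> V w" "0 \<le> C"
    and dominated: "\<And>t. 0 < t \<Longrightarrow> prob {w \<in> space M. t < U w} \<le> C * prob {w \<in> space M. t < V w}"
    and "0 \<le> T" "1 \<le> n"
  shows "(\<integral>w. (min (U w) T) ^ (n + 1) \<partial>M) \<le> C * (\<integral>w. (min (V w) T) ^ (n + 1) \<partial>M)"
proof -
  note U = expectation_min_power_eq[OF assms(1,3,7), of n]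
  note V = expectation_min_power_eq[OF assms(2,4,7), of n]
  have "indicator {0..T} s * s ^ n * prob {w \<in> space M. s < U w}
      \<le> C * (indicator {0..T} s * s ^ n * prob {w \<in> space M. s < V w})" for s
  proof (cases "0 < s")
    case True
    then show ?thesis
      using dominated[OF True] by (simp add: indicator_def mult_left_mono)
  next
    case False
    then show ?thesis
      using \<open>1 \<le> n\<close> by (auto simp: indicator_def power_0_left)
  qed
  then have "(\<integral>s. indicator {0..T} s * s ^ n * prob {w \<in> space M. s < U w} \<partial>lborel_Icc T)
      \<le> (\<integral>s. C * (indicator {0..T} s * s ^ n * prob {w \<in> space M. s < V w}) \<partial>lborel_Icc T)"
    using U(2) V(2) by (intro integral_mono) auto
  then show ?thesis
    unfolding U(1) V(1) by (simp add: mult.left_commute)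
qed

lemma sum_indicator_less_le:
  fixes x :: real
  assumes "0 \<le> x"
  shows "(\<Sum>j = 1..N. indicator {..<x} (real j)) \<le> x"
proof (induction N)
  case (Suc N)
  have "(\<Sum>j = 1..N. indicator {..<x} (real j) :: real) \<le> (\<Sum>j = 1..N. 1)"
    by (intro sum_mono) (simp add: indicator_def)
  then show ?case
    using Suc assms by (cases "real (Suc N) < x") (auto simp: indicator_def)
qed (use assms in simp)

lemma (in prob_space) sum_prob_greater_le_expectation:
  fixes W :: "'a \<Rightarrow> real"
  assumes [measurable]: "W \<in> borel_measurable M" and "\<And>w. 0 \<le> W w" and "integrable M W"
  shows "(\<Sum>j = 1..N. prob {w \<in> space M. real j < W w}) \<le> (\<integral>w. W w \<partial>M)"
proof -
  have "(\<Sum>j = 1..N. prob {w \<in> space M. real j < W w}) = (\<integral>w. (\<Sum>j = 1..N. indicator {..<W w} (real j)) \<partial>M)"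
    by (simp add: Bochner_Integration.integral_sum integrable_bounded[where B=1] expectation_indicator_lessThan)
  also have "\<dots> \<le> (\<integral>w. W w \<partial>M)"
    using assms sum_indicator_less_le
    by (intro integral_mono[OF Bochner_Integration.integrable_sum[OF integrable_bounded[where B=1]]])
      auto
  finally show ?thesis .
qed

lemma (in prob_space) Cov_sum_sum:
  fixes X :: "nat \<Rightarrow> 'a \<Rightarrow> real"
  assumes [measurable]: "\<And>k. X k \<in> borel_measurable M" and bound: "\<And>k w. \<bar>X k w\<bar> \<le> B"
  shows "Cov M (\<lambda>w. \<Sum>k\<in>S. X k w) (\<lambda>w. \<Sum>k\<in>S. X k w) = (\<Sum>k\<in>S. \<Sum>j\<in>S. Cov M (X k) (X j))"
proof -
  have "integrable M (X k)" "integrable M (\<lambda>w. X k w * X j w)" for k j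
    by (rule integrable_bounded[where B=B], measurable, rule bound)
      (rule integrable_bounded[where B="B * B"], measurable, intro abs_mult_le_mult bound)
  then show ?thesis
    unfolding Cov_def
    by (simp add: sum_product Bochner_Integration.integral_sum Bochner_Integration.integrable_sum
        sum_subtractf)
qed

lemma (in prob_space) Chebyshev_inequality_Cov:
  fixes Z :: "'a \<Rightarrow> real"
  assumes [measurable]: "Z \<in> borel_measurable M" and "\<And>w. \<bar>Z w\<bar> \<le> B" and "0 < a"
  shows "prob {w \<in> space M. a \<le> \<bar>Z w - (\<integral>v. Z v \<partial>M)\<bar>} \<le> Cov M Z Z / a\<^sup>2"
proof -
  have Z2: "integrable M (\<lambda>w. (Z w)\<^sup>2)"
    unfolding power2_eq_square
    by (rule integrable_bounded[where B="B * B"], measurable, intro abs_mult_le_mult assms)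
  have Z: "integrable M Z"
    by (rule integrable_bounded[where B=B]) (use assms in auto)
  have "variance Z = Cov M Z Z"
    unfolding variance_eq[OF Z Z2] Cov_def by (simp add: power2_eq_square)
  then show ?thesis
    using Chebyshev_inequality[OF _ Z2 \<open>0 < a\<close>] by simp
qed

lemma sum_min_pow2_sq_div_le_aux:
  fixes x :: real
  assumes "0 \<le> x"
  shows "(\<Sum>i<N. (min x (2 ^ i))\<^sup>2 / 2 ^ i) \<le> (if 2 ^ N \<le> x then 2 ^ N else 4 * x - 2 * x\<^sup>2 / 2 ^ N)"
proof (induction N)
  case 0
  have "0 \<le> 2 * x * (2 - x)" if "x < 1"
    using assms that by simp
  then show ?case
    by (auto simp: power2_eq_square algebra_simps)
next
  case (Suc N)
  define y :: real where "y = 2 ^ N"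
  define S where "S = (\<Sum>i<N. (min x (2 ^ i))\<^sup>2 / 2 ^ i)"
  have "0 < y" unfolding y_def by simp
  have IH: "S \<le> (if y \<le> x then y else 4 * x - 2 * x\<^sup>2 / y)"
    using Suc unfolding S_def y_def .
  have step: "S + (min x y)\<^sup>2 / y \<le> (if 2 * y \<le> x then 2 * y else 4 * x - 2 * x\<^sup>2 / (2 * y))"
  proof -
    consider "2 * y \<le> x" | "y \<le> x" "x < 2 * y" | "x < y" by linarith
    then show ?thesis
    proof cases
      case 1
      then show ?thesis using IH \<open>0 < y\<close> by (simp add: power2_eq_square)
    next
      case 2
      have "0 \<le> (2 * y - x) * (x - y)" "0 \<le> x * y"
        using 2 \<open>0 < y\<close> by simp_all
      moreover have "(2 * y - x) * (x - y) = 3 * x * y - x * x - 2 * y * y"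
        by (simp add: algebra_simps)
      ultimately have "x * x \<le> 4 * x * y - 2 * y * y"
        by linarith
      then have "2 * y \<le> 4 * x - 2 * x\<^sup>2 / (2 * y)"
        using \<open>0 < y\<close> by (simp add: field_simps power2_eq_square)
      then show ?thesis using 2 IH \<open>0 < y\<close> by (simp add: power2_eq_square)
    next
      case 3
      then have "\<not> 2 * y \<le> x" "2 * x\<^sup>2 / (2 * y) = x\<^sup>2 / y" "S \<le> 4 * x - 2 * (x\<^sup>2 / y)"
        using IH \<open>0 < y\<close> by simp_all
      then show ?thesis using 3 by simp
    qed
  qed
  have "(\<Sum>i<Suc N. (min x (2 ^ i))\<^sup>2 / 2 ^ i) = S + (min x y)\<^sup>2 / y"
    unfolding S_def y_def by simp
  moreover have "(2 :: real) ^ Suc N = 2 * y"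
    unfolding y_def by simp
  ultimately show ?case
    using step by (simp only:)
qed

lemma sum_min_pow2_sq_div_le:
  fixes x :: real
  assumes "0 \<le> x"
  shows "(\<Sum>i<N. (min x (2 ^ i))\<^sup>2 / 2 ^ i) \<le> 4 * x"
proof -
  have "(if 2 ^ N \<le> x then 2 ^ N else 4 * x - 2 * x\<^sup>2 / 2 ^ N) \<le> 4 * x"
    using assms by (auto simp: divide_nonneg_pos)
  then show ?thesis
    using sum_min_pow2_sq_div_le_aux[OF assms, of N] by linarith
qed

lemma power2_pow2: "((2::real) ^ n)\<^sup>2 = 4 ^ n"
  by (metis power_mult_distrib power2_eq_square num_double numeral_times_numeral)

lemma pow2_interval_unique:
  fixes t :: real
  assumes "2 ^ i \<le> t" "t < 2 ^ (i + 1)" "2 ^ i' \<le> t" "t < 2 ^ (i' + 1)"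
  shows "i = i'"
proof (rule ccontr)
  assume "i \<noteq> i'"
  then consider "i + 1 \<le> i'" | "i' + 1 \<le> i"
    by linarith
  then show False
  proof cases
    case 1
    then have "(2::real) ^ (i + 1) \<le> 2 ^ i'"
      by (rule power_increasing) simp
    then show False using assms by linarith
  next
    case 2
    then have "(2::real) ^ (i' + 1) \<le> 2 ^ i"
      by (rule power_increasing) simp
    then show False using assms by linarith
  qed
qed

lemma dyadic_weight_le:
  fixes g :: "real \<Rightarrow> real"
  assumes g_mono: "\<And>T T'. 0 \<le> T \<Longrightarrow> T \<le> T' \<Longrightarrow> g T \<le> g T'"
    and g_nonneg: "\<And>T. 0 \<le> T \<Longrightarrow> 0 \<le> g T"
    and t: "2 ^ i \<le> t" "t < 2 ^ (i + 1)"
  shows "g (sqrt (2 ^ i)) / 4 ^ (i + 1) \<le> t powr (-2) * g (sqrt t)"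
proof -
  have "0 < t"
    using t(1) by (meson less_le_trans zero_less_numeral zero_less_power)
  have "t\<^sup>2 \<le> (2 ^ (i + 1))\<^sup>2"
    using t \<open>0 < t\<close> by (intro power_mono) auto
  then have "t\<^sup>2 \<le> 4 ^ (i + 1)"
    by (simp only: power2_pow2)
  then have "1 / 4 ^ (i + 1) \<le> 1 / t\<^sup>2"
    using \<open>0 < t\<close> by (intro divide_left_mono) auto
  also have "\<dots> = t powr (-2)"
    using \<open>0 < t\<close> by (simp add: powr_minus_divide powr_numeral)
  finally have "1 / 4 ^ (i + 1) \<le> t powr (-2)" .
  moreover have "g (sqrt (2 ^ i)) \<le> g (sqrt t)"
    using t by (intro g_mono) auto
  ultimately have "1 / 4 ^ (i + 1) * g (sqrt (2 ^ i)) \<le> t powr (-2) * g (sqrt t)"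
    using g_nonneg[of "sqrt (2 ^ i)"] by (intro mult_mono) auto
  then show ?thesis
    by simp
qed

lemma sum_dyadic_indicator_le:
  fixes g :: "real \<Rightarrow> real" and j :: nat
  assumes g_mono: "\<And>T T'. 0 \<le> T \<Longrightarrow> T \<le> T' \<Longrightarrow> g T \<le> g T'"
    and g_nonneg: "\<And>T. 0 \<le> T \<Longrightarrow> 0 \<le> g T"
    and S: "finite S" "\<And>i. i \<in> S \<Longrightarrow> j \<le> 2 ^ i"
  shows "(\<Sum>i\<in>S. ennreal (g (sqrt (2 ^ i)) / 4 ^ (i + 1)) * indicator {2 ^ i..<2 ^ (i + 1)} t)
    \<le> ennreal (t powr (-2) * g (sqrt t)) * indicator {real j..} t"
proof (cases "\<exists>i\<in>S. t \<in> {2 ^ i..<2 ^ (i + 1)}")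
  case True
  then obtain i where i: "i \<in> S" "2 ^ i \<le> t" "t < 2 ^ (i + 1)"
    by auto
  have "t \<notin> {2 ^ i'..<2 ^ (i' + 1)}" if "i' \<noteq> i" for i'
    using pow2_interval_unique[of i' t i] i that by auto
  then have "(\<Sum>i'\<in>S - {i}. ennreal (g (sqrt (2 ^ i')) / 4 ^ (i' + 1)) * indicator {2 ^ i'..<2 ^ (i' + 1)} t) = 0"
    by (intro sum.neutral) auto
  moreover have "real j \<le> 2 ^ i"
    using S(2)[OF i(1)] by (metis of_nat_le_iff of_nat_numeral of_nat_power)
  then have "real j \<le> t"
    using i(2) by linarith
  ultimately show ?thesis
    using i dyadic_weight_le[where g=g, OF g_mono g_nonneg i(2,3)]
    by (simp add: sum.remove[OF S(1) i(1)] ennreal_leI indicator_def)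
next
  case False
  then show ?thesis
    by (simp add: sum.neutral)
qed

lemma dyadic_sum_le_integral:
  fixes g :: "real \<Rightarrow> real" and j :: nat
  assumes g_mono: "\<And>T T'. 0 \<le> T \<Longrightarrow> T \<le> T' \<Longrightarrow> g T \<le> g T'"
    and g_nonneg: "\<And>T. 0 \<le> T \<Longrightarrow> 0 \<le> g T"
  shows "ennreal (\<Sum>i\<in>{i. i \<le> N \<and> j \<le> 2 ^ i}. g (sqrt (2 ^ i)) / 2 ^ i)
    \<le> 4 * (\<integral>\<^sup>+ t\<in>{real j..}. ennreal (t powr (-2) * g (sqrt t)) \<partial>lborel)"
proof -
  define S where "S = {i. i \<le> N \<and> j \<le> 2 ^ i}"
  have "finite S"
    unfolding S_def by (rule finite_subset[of _ "{..N}"]) auto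
  define c where "c i = g (sqrt (2 ^ i)) / 4 ^ (i + 1)" for i :: nat
  have c_nonneg: "0 \<le> c i" for i
    unfolding c_def using g_nonneg by simp
  have "ennreal (\<Sum>i\<in>S. c i * 2 ^ i) = (\<Sum>i\<in>S. ennreal (c i) * emeasure lborel {(2::real) ^ i..<2 ^ (i + 1)})"
    using c_nonneg by (simp add: sum_ennreal[symmetric] ennreal_mult)
  also have "\<dots> = (\<Sum>i\<in>S. \<integral>\<^sup>+ t. ennreal (c i) * indicator {(2::real) ^ i..<2 ^ (i + 1)} t \<partial>lborel)"
    by (simp add: nn_integral_cmult_indicator)
  also have "\<dots> = (\<integral>\<^sup>+ t. (\<Sum>i\<in>S. ennreal (c i) * indicator {(2::real) ^ i..<2 ^ (i + 1)} t) \<partial>lborel)"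
    by (rule nn_integral_sum[symmetric]) simp
  also have "\<dots> \<le> (\<integral>\<^sup>+ t\<in>{real j..}. ennreal (t powr (-2) * g (sqrt t)) \<partial>lborel)"
    unfolding c_def using \<open>finite S\<close> g_mono g_nonneg
    by (intro nn_integral_mono sum_dyadic_indicator_le) (auto simp: S_def)
  finally have "ennreal (\<Sum>i\<in>S. c i * 2 ^ i) \<le> \<dots>" .
  moreover have "g (sqrt (2 ^ i)) / 2 ^ i = 4 * (c i * 2 ^ i)" for i
  proof -
    have "(4::real) ^ (i + 1) = 4 * (2 ^ i * 2 ^ i)"
      using power2_pow2[of i] by (simp add: power2_eq_square)
    then show ?thesis
      unfolding c_def by (simp add: field_simps)
  qed
  then have "(\<Sum>i\<in>S. g (sqrt (2 ^ i)) / 2 ^ i) = 4 * (\<Sum>i\<in>S. c i * 2 ^ i)"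
    by (simp add: sum_distrib_left)
  ultimately show ?thesis
    unfolding S_def[symmetric] using c_nonneg
    by (simp add: ennreal_mult sum_nonneg mult_left_mono)
qed

lemma sum_sum_symmetric:
  fixes f :: "nat \<Rightarrow> nat \<Rightarrow> real"
  assumes "finite S" and sym: "\<And>k j. f k j = f j k"
  shows "(\<Sum>k\<in>S. \<Sum>j\<in>S. f k j) = (\<Sum>j\<in>S. f j j) + 2 * (\<Sum>j\<in>S. \<Sum>k\<in>{k\<in>S. k < j}. f k j)"
proof -
  define g where "g k j = (if k < j then f k j else 0)" for k j
  have split: "f k j = (if k = j then f j j else 0) + g k j + g j k" for k j
    unfolding g_def using sym[of k j] by auto
  have "(\<Sum>k\<in>S. \<Sum>j\<in>S. g k j) = (\<Sum>j\<in>S. \<Sum>k\<in>{k\<in>S. k < j}. f k j)"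
    unfolding g_def using \<open>finite S\<close> by (subst sum.swap) (simp add: sum.inter_filter[symmetric])
  moreover have "(\<Sum>k\<in>S. \<Sum>j\<in>S. g j k) = (\<Sum>k\<in>S. \<Sum>j\<in>S. g k j)"
    by (rule sum.swap)
  ultimately show ?thesis
    using \<open>finite S\<close> by (subst split) (simp add: sum.distrib sum.delta)
qed

lemma ex_pow2_between: "1 \<le> n \<Longrightarrow> \<exists>i. n \<le> 2 ^ i \<and> 2 ^ i < 2 * (n :: nat)"
proof (induction n rule: dec_induct)
  case (step n)
  then obtain i where i: "n \<le> 2 ^ i" "2 ^ i < 2 * n"
    by blast
  show ?case
  proof (cases "Suc n \<le> 2 ^ i")
    case True
    then show ?thesis using i by auto
  next
    case False
    then have "2 ^ i = n" using i by simp
    then show ?thesis using step by (intro exI[of _ "Suc i"]) auto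
  qed
qed (intro exI[of _ 0], simp)

lemma Gfun_eq_Cov_min:
  assumes "\<And>w. 0 \<le> X w" "\<And>w. 0 \<le> Y w" "0 \<le> T"
  shows "Gfun M X Y T = Cov M (\<lambda>w. min (X w) T) (\<lambda>w. min (Y w) T)"
proof -
  have "trunc T (Z w) = min (Z w) T" if "\<And>w. 0 \<le> Z w" for Z :: "'a \<Rightarrow> real" and w
    using that[of w] \<open>0 \<le> T\<close> unfolding trunc_def by simp
  then show ?thesis
    unfolding Gfun_def using assms by simp
qed

lemma min_sqrt_sq: "0 \<le> x \<Longrightarrow> 0 \<le> y \<Longrightarrow> (min x (sqrt y))\<^sup>2 = min (x\<^sup>2) y"
  by (metis linorder_le_less_linear min.absorb4 min_def real_le_rsqrt real_less_lsqrt real_sqrt_pow2_iff)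

locale dominated_upper_PQD_seq = prob_space M for M :: "'a measure" +
  fixes U :: "nat \<Rightarrow> 'a \<Rightarrow> real" and V :: "'a \<Rightarrow> real" and C :: real
  assumes U_measurable [measurable]: "\<And>j. U j \<in> borel_measurable M"
    and U_nonneg: "\<And>j w. 0 \<le> U j w"
    and V_measurable [measurable]: "V \<in> borel_measurable M"
    and V_nonneg: "\<And>w. 0 \<le> V w"
    and V_square_integrable: "integrable M (\<lambda>w. (V w)\<^sup>2)"
    and C_nonneg: "0 \<le> C"
    and dominated: "\<And>j t. 1 \<le> j \<Longrightarrow> 0 < t \<Longrightarrow>
      prob {w \<in> space M. t < U j w} \<le> C * prob {w \<in> space M. t < V w}"
    and upper_PQD: "\<And>k j. 1 \<le> k \<Longrightarrow> k < j \<Longrightarrow> upper_PQD M (U k) (U j)"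
    and Gfun_series: "(\<Sum>j. \<Sum>k\<in>{1..<j}. \<integral>\<^sup>+ t\<in>{real j..}.
      ennreal (t powr (-2) * Gfun M (U k) (U j) (sqrt t)) \<partial>lborel) < \<infinity>"
begin

lemma nonneg_upper_PQD: "1 \<le> k \<Longrightarrow> k < j \<Longrightarrow> nonneg_upper_PQD M (U k) (U j)"
  by unfold_locales (auto intro: U_nonneg upper_PQD)

lemma Gfun_nonneg: "1 \<le> k \<Longrightarrow> k < j \<Longrightarrow> 0 \<le> T \<Longrightarrow> 0 \<le> Gfun M (U k) (U j) T"
  by (simp add: Gfun_eq_Cov_min U_nonneg nonneg_upper_PQD.Cov_min_nonneg[OF nonneg_upper_PQD])

lemma Gfun_mono: "1 \<le> k \<Longrightarrow> k < j \<Longrightarrow> 0 \<le> T \<Longrightarrow> T \<le> T' \<Longrightarrow> Gfun M (U k) (U j) T \<le> Gfun M (U k) (U j) T'"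
  by (simp add: Gfun_eq_Cov_min U_nonneg nonneg_upper_PQD.Cov_min_mono[OF nonneg_upper_PQD])

definition trunc_sq :: "nat \<Rightarrow> nat \<Rightarrow> 'a \<Rightarrow> real" where
  "trunc_sq i j w = (min (U j w) (sqrt (2 ^ i)))\<^sup>2"

definition block_sum :: "nat \<Rightarrow> 'a \<Rightarrow> real" where
  "block_sum i w = (\<Sum>j = 1..2 ^ i. trunc_sq i j w)"

definition block_Gfun_sum :: "nat \<Rightarrow> real" where
  "block_Gfun_sum i = (\<Sum>j = 1..2 ^ i. \<Sum>k = 1..<j. Gfun M (U k) (U j) (sqrt (2 ^ i)))"

lemma trunc_sq_measurable [measurable]: "trunc_sq i j \<in> borel_measurable M"
  unfolding trunc_sq_def[abs_def] by measurable

lemma block_sum_measurable [measurable]: "block_sum i \<in> borel_measurable M"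
  unfolding block_sum_def[abs_def] by measurable

lemma trunc_sq_bounds: "0 \<le> trunc_sq i j w" "trunc_sq i j w \<le> 2 ^ i"
proof -
  have "(min (U j w) (sqrt (2 ^ i)))\<^sup>2 \<le> (sqrt (2 ^ i))\<^sup>2"
    using U_nonneg[of j w] by (intro power_mono) auto
  then show "0 \<le> trunc_sq i j w" "trunc_sq i j w \<le> 2 ^ i"
    unfolding trunc_sq_def by simp_all
qed

lemma abs_trunc_sq_le: "\<bar>trunc_sq i j w\<bar> \<le> 2 ^ i"
  using trunc_sq_bounds by simp

lemma abs_block_sum_le: "\<bar>block_sum i w\<bar> \<le> 2 ^ i * 2 ^ i"
proof -
  have "\<bar>block_sum i w\<bar> \<le> (\<Sum>j = 1..2 ^ i. \<bar>trunc_sq i j w\<bar>)"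
    unfolding block_sum_def by (rule sum_abs)
  also have "\<dots> \<le> (\<Sum>j = 1..(2::nat) ^ i. 2 ^ i)"
    by (intro sum_mono abs_trunc_sq_le)
  finally show ?thesis
    by simp
qed

lemma trunc_sq_eq: "(U j w)\<^sup>2 \<le> 2 ^ i \<Longrightarrow> trunc_sq i j w = (U j w)\<^sup>2"
  unfolding trunc_sq_def using U_nonneg[of j w] by (simp add: min_def real_le_rsqrt)

lemma min_V_power_integrable: "0 \<le> T \<Longrightarrow> integrable M (\<lambda>w. (min (V w) T) ^ n)"
  by (rule integrable_bounded[where B="T ^ n"]) (use V_nonneg in \<open>auto intro!: power_mono\<close>)

lemma expectation_trunc_sq_le:
  assumes "1 \<le> j"
  shows "(\<integral>w. trunc_sq i j w \<partial>M) \<le> C * (\<integral>w. (V w)\<^sup>2 \<partial>M)"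
proof -
  have "(\<integral>w. (min (U j w) (sqrt (2 ^ i))) ^ (1 + 1) \<partial>M) \<le> C * (\<integral>w. (min (V w) (sqrt (2 ^ i))) ^ (1 + 1) \<partial>M)"
    using assms U_nonneg V_nonneg C_nonneg dominated
    by (intro expectation_min_power_le_dominated) auto
  also have "\<dots> \<le> C * (\<integral>w. (V w)\<^sup>2 \<partial>M)"
  proof (intro mult_left_mono integral_mono min_V_power_integrable V_square_integrable C_nonneg)
    show "(min (V w) (sqrt (2 ^ i))) ^ (1 + 1) \<le> (V w)\<^sup>2" for w
      using V_nonneg[of w] by (simp only: one_add_one) (rule power_mono, auto)
  qed simp
  finally show ?thesis
    unfolding trunc_sq_def by (simp add: power2_eq_square)
qed

lemma expectation_trunc_sq_sq_le:
  assumes "1 \<le> j"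
  shows "(\<integral>w. (trunc_sq i j w)\<^sup>2 \<partial>M) \<le> C * (\<integral>w. (min ((V w)\<^sup>2) (2 ^ i))\<^sup>2 \<partial>M)"
proof -
  have "(min x (sqrt (2 ^ i))) ^ (3 + 1) = (min (x\<^sup>2) (2 ^ i))\<^sup>2" if "0 \<le> x" for x :: real
  proof -
    have "(min x (sqrt (2 ^ i))) ^ (3 + 1) = ((min x (sqrt (2 ^ i)))\<^sup>2)\<^sup>2"
      by (simp flip: power_mult)
    then show ?thesis
      using min_sqrt_sq[OF that, of "2 ^ i"] by simp
  qed
  moreover have "(\<integral>w. (min (U j w) (sqrt (2 ^ i))) ^ (3 + 1) \<partial>M) \<le> C * (\<integral>w. (min (V w) (sqrt (2 ^ i))) ^ (3 + 1) \<partial>M)"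
    using assms U_nonneg V_nonneg C_nonneg dominated
    by (intro expectation_min_power_le_dominated) auto
  ultimately show ?thesis
    unfolding trunc_sq_def using U_nonneg V_nonneg by simp
qed

lemma Cov_trunc_sq_le:
  assumes "1 \<le> k" "k < j"
  shows "Cov M (trunc_sq i k) (trunc_sq i j) \<le> 4 * 2 ^ i * Gfun M (U k) (U j) (sqrt (2 ^ i))"
  using nonneg_upper_PQD.Cov_min_sq_le[OF nonneg_upper_PQD[OF assms], of "sqrt (2 ^ i)"]
  by (simp add: trunc_sq_def[abs_def] Gfun_eq_Cov_min U_nonneg)

lemma Cov_block_sum_le:
  "Cov M (block_sum i) (block_sum i)
    \<le> (\<Sum>j = 1..2 ^ i. \<integral>w. (trunc_sq i j w)\<^sup>2 \<partial>M) + 8 * 2 ^ i * block_Gfun_sum i"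
proof -
  have "Cov M (block_sum i) (block_sum i) = (\<Sum>k = 1..2 ^ i. \<Sum>j = 1..2 ^ i. Cov M (trunc_sq i k) (trunc_sq i j))"
    unfolding block_sum_def[abs_def] by (rule Cov_sum_sum) (auto intro: abs_trunc_sq_le)
  also have "\<dots> = (\<Sum>j = 1..2 ^ i. Cov M (trunc_sq i j) (trunc_sq i j))
      + 2 * (\<Sum>j = 1..2 ^ i. \<Sum>k\<in>{k \<in> {1..2 ^ i}. k < j}. Cov M (trunc_sq i k) (trunc_sq i j))"
    by (rule sum_sum_symmetric[OF finite_atLeastAtMost Cov_commute])
  also have "\<dots> \<le> (\<Sum>j = 1..2 ^ i. \<integral>w. (trunc_sq i j w)\<^sup>2 \<partial>M)
      + 2 * (\<Sum>j = 1..2 ^ i. \<Sum>k = 1..<j. 4 * 2 ^ i * Gfun M (U k) (U j) (sqrt (2 ^ i)))"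
  proof -
    have "Cov M (trunc_sq i j) (trunc_sq i j) \<le> (\<integral>w. (trunc_sq i j w)\<^sup>2 \<partial>M)" for j
      unfolding Cov_def by (simp add: power2_eq_square)
    moreover have "(\<Sum>k\<in>{k \<in> {1..2 ^ i}. k < j}. Cov M (trunc_sq i k) (trunc_sq i j))
        \<le> (\<Sum>k = 1..<j. 4 * 2 ^ i * Gfun M (U k) (U j) (sqrt (2 ^ i)))"
      if "j \<in> {1..2 ^ i}" for j :: nat
    proof -
      have set_eq: "{k \<in> {1..2 ^ i}. k < j} = {1..<j}"
        using that by auto
      show ?thesis
        unfolding set_eq by (intro sum_mono Cov_trunc_sq_le) auto
    qed
    ultimately show ?thesis
      by (intro add_mono mult_left_mono sum_mono) auto
  qed
  finally show ?thesis
    unfolding block_Gfun_sum_def by (simp add: sum_distrib_left mult.assoc)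
qed

lemma expectation_min_sq_series_le:
  "(\<Sum>i\<le>N. (\<integral>w. (min ((V w)\<^sup>2) (2 ^ i))\<^sup>2 \<partial>M) / 2 ^ i) \<le> 4 * (\<integral>w. (V w)\<^sup>2 \<partial>M)"
proof -
  have int: "integrable M (\<lambda>w. (min ((V w)\<^sup>2) (2 ^ i))\<^sup>2)" for i :: nat
    by (rule integrable_bounded[where B="2 ^ i * 2 ^ i"])
      (auto simp: abs_of_nonneg power2_eq_square intro!: mult_mono)
  have "(\<Sum>i\<le>N. (\<integral>w. (min ((V w)\<^sup>2) (2 ^ i))\<^sup>2 \<partial>M) / 2 ^ i)
      = (\<integral>w. (\<Sum>i<Suc N. (min ((V w)\<^sup>2) (2 ^ i))\<^sup>2 / 2 ^ i) \<partial>M)"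
    by (simp add: Bochner_Integration.integral_sum int lessThan_Suc_atMost)
  also have "\<dots> \<le> (\<integral>w. 4 * (V w)\<^sup>2 \<partial>M)"
    using V_square_integrable int
    by (intro integral_mono sum_min_pow2_sq_div_le) auto
  finally show ?thesis
    by simp
qed

lemma sum_dyadic_swap:
  fixes f :: "nat \<Rightarrow> nat \<Rightarrow> real"
  shows "(\<Sum>i\<le>N. \<Sum>j = 1..2 ^ i. f i j) = (\<Sum>j = 1..2 ^ N. \<Sum>i\<in>{i. i \<le> N \<and> j \<le> 2 ^ i}. f i j)"
proof -
  have "(\<Sum>i\<le>N. \<Sum>j = 1..2 ^ i. f i j) = (\<Sum>i\<le>N. \<Sum>j\<in>{j \<in> {1..2 ^ N}. j \<le> 2 ^ i}. f i j)"
  proof (rule sum.cong[OF refl])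
    fix i assume "i \<in> {..N}"
    then have "(2::nat) ^ i \<le> 2 ^ N"
      by (intro power_increasing) auto
    then have "{j \<in> {1..2 ^ N}. j \<le> 2 ^ i} = {1..(2::nat) ^ i}"
      by (auto intro: order_trans)
    then show "(\<Sum>j = 1..2 ^ i. f i j) = (\<Sum>j\<in>{j \<in> {1..2 ^ N}. j \<le> 2 ^ i}. f i j)"
      by simp
  qed
  also have "\<dots> = (\<Sum>j = 1..2 ^ N. \<Sum>i\<in>{i \<in> {..N}. j \<le> 2 ^ i}. f i j)"
    by (rule sum.swap_restrict) auto
  finally show ?thesis
    by (simp add: conj_commute)
qed

lemma block_Gfun_series_le:
  "ennreal (\<Sum>i\<le>N. block_Gfun_sum i / 2 ^ i)
    \<le> 4 * (\<Sum>j. \<Sum>k\<in>{1..<j}. \<integral>\<^sup>+ t\<in>{real j..}. ennreal (t powr (-2) * Gfun M (U k) (U j) (sqrt t)) \<partial>lborel)"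
proof -
  define I where "I k j = (\<integral>\<^sup>+ t\<in>{real j..}. ennreal (t powr (-2) * Gfun M (U k) (U j) (sqrt t)) \<partial>lborel)"
    for k j :: nat
  define D where "D j k = (\<Sum>i\<in>{i. i \<le> N \<and> j \<le> 2 ^ i}. Gfun M (U k) (U j) (sqrt (2 ^ i)) / 2 ^ i)"
    for j k :: nat
  have D_nonneg: "0 \<le> D j k" if "k \<in> {1..<j}" for j k
    unfolding D_def using that by (intro sum_nonneg divide_nonneg_pos Gfun_nonneg) auto
  have "(\<Sum>i\<le>N. block_Gfun_sum i / 2 ^ i)
      = (\<Sum>i\<le>N. \<Sum>j = 1..2 ^ i. \<Sum>k = 1..<j. Gfun M (U k) (U j) (sqrt (2 ^ i)) / 2 ^ i)"
    unfolding block_Gfun_sum_def by (simp add: sum_divide_distrib)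
  also have "\<dots> = (\<Sum>j = 1..2 ^ N. \<Sum>i\<in>{i. i \<le> N \<and> j \<le> 2 ^ i}. \<Sum>k = 1..<j. Gfun M (U k) (U j) (sqrt (2 ^ i)) / 2 ^ i)"
    by (rule sum_dyadic_swap)
  also have "\<dots> = (\<Sum>j = 1..2 ^ N. \<Sum>k = 1..<j. D j k)"
    unfolding D_def by (intro sum.cong refl sum.swap)
  finally have "ennreal (\<Sum>i\<le>N. block_Gfun_sum i / 2 ^ i) = ennreal (\<Sum>j = 1..2 ^ N. \<Sum>k = 1..<j. D j k)"
    by simp
  also have "\<dots> = (\<Sum>j = 1..2 ^ N. ennreal (\<Sum>k = 1..<j. D j k))"
    using D_nonneg by (intro sum_ennreal[symmetric] sum_nonneg) auto
  also have "\<dots> = (\<Sum>j = 1..2 ^ N. \<Sum>k = 1..<j. ennreal (D j k))"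
    using D_nonneg by (intro sum.cong refl sum_ennreal[symmetric]) auto
  also have "\<dots> \<le> (\<Sum>j = 1..2 ^ N. \<Sum>k = 1..<j. 4 * I k j)"
    unfolding D_def I_def using Gfun_mono Gfun_nonneg
    by (intro sum_mono dyadic_sum_le_integral) auto
  also have "\<dots> \<le> 4 * (\<Sum>j. \<Sum>k\<in>{1..<j}. I k j)"
    by (simp add: sum_distrib_left[symmetric] mult_left_mono sum_le_suminf)
  finally show ?thesis
    unfolding I_def .
qed

lemma block_Gfun_series_bounded: "\<exists>K. \<forall>N. (\<Sum>i\<le>N. block_Gfun_sum i / 2 ^ i) \<le> K"
proof -
  define S where "S = (\<Sum>j. \<Sum>k\<in>{1..<j}. \<integral>\<^sup>+ t\<in>{real j..}.
      ennreal (t powr (-2) * Gfun M (U k) (U j) (sqrt t)) \<partial>lborel)"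
  have "S < \<infinity>"
    using Gfun_series unfolding S_def .
  then obtain K where K: "0 \<le> K" "S = ennreal K"
    by (cases S rule: ennreal_cases) auto
  have "ennreal (\<Sum>i\<le>N. block_Gfun_sum i / 2 ^ i) \<le> ennreal (4 * K)" for N
    using block_Gfun_series_le[of N] K by (simp add: S_def ennreal_mult')
  then have "(\<Sum>i\<le>N. block_Gfun_sum i / 2 ^ i) \<le> 4 * K" for N
    using K(1) by (simp add: ennreal_le_iff)
  then show ?thesis
    by blast
qed

lemma expectation_block_sum_le: "(\<integral>w. block_sum i w \<partial>M) \<le> 2 ^ i * (C * (\<integral>w. (V w)\<^sup>2 \<partial>M))"
proof -
  have "(\<integral>w. block_sum i w \<partial>M) = (\<Sum>j = 1..2 ^ i. \<integral>w. trunc_sq i j w \<partial>M)"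
    unfolding block_sum_def
    by (rule Bochner_Integration.integral_sum) (rule integrable_bounded[OF _ abs_trunc_sq_le], simp)
  also have "\<dots> \<le> (\<Sum>j = 1..(2::nat) ^ i. C * (\<integral>w. (V w)\<^sup>2 \<partial>M))"
    by (intro sum_mono expectation_trunc_sq_le) auto
  finally show ?thesis
    by simp
qed

lemma variance_block_sum_le:
  "Cov M (block_sum i) (block_sum i) / 4 ^ i
    \<le> C * (\<integral>w. (min ((V w)\<^sup>2) (2 ^ i))\<^sup>2 \<partial>M) / 2 ^ i + 8 * block_Gfun_sum i / 2 ^ i"
proof -
  define E where "E = (\<integral>w. (min ((V w)\<^sup>2) (2 ^ i))\<^sup>2 \<partial>M)"
  have "(\<Sum>j = 1..2 ^ i. \<integral>w. (trunc_sq i j w)\<^sup>2 \<partial>M) \<le> (\<Sum>j = 1..(2::nat) ^ i. C * E)"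
    unfolding E_def by (intro sum_mono expectation_trunc_sq_sq_le) auto
  then have "Cov M (block_sum i) (block_sum i) \<le> 2 ^ i * (C * E + 8 * block_Gfun_sum i)"
    using Cov_block_sum_le[of i] by (simp add: algebra_simps)
  then have "Cov M (block_sum i) (block_sum i) / 4 ^ i \<le> 2 ^ i * (C * E + 8 * block_Gfun_sum i) / (2 ^ i * 2 ^ i)"
    by (simp add: divide_right_mono flip: power_mult_distrib)
  also have "2 ^ i * (C * E + 8 * block_Gfun_sum i) / (2 ^ i * 2 ^ i) = C * E / 2 ^ i + 8 * block_Gfun_sum i / 2 ^ i"
    by (simp only: mult_divide_mult_cancel_left_if add_divide_distrib) simp
  finally show ?thesis
    unfolding E_def .
qed

lemma summable_prob_block_sum_deviation:
  "summable (\<lambda>i. prob {w \<in> space M. 2 ^ i \<le> \<bar>block_sum i w - (\<integral>v. block_sum i v \<partial>M)\<bar>})"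
proof -
  define u where "u i = C * (\<integral>w. (min ((V w)\<^sup>2) (2 ^ i))\<^sup>2 \<partial>M) / 2 ^ i + 8 * block_Gfun_sum i / 2 ^ i"
    for i :: nat
  have u_nonneg: "0 \<le> u i" for i
    unfolding u_def block_Gfun_sum_def using C_nonneg
    by (intro add_nonneg_nonneg divide_nonneg_pos mult_nonneg_nonneg sum_nonneg Gfun_nonneg) auto
  obtain K where K: "\<And>N. (\<Sum>i\<le>N. block_Gfun_sum i / 2 ^ i) \<le> K"
    using block_Gfun_series_bounded by blast
  have "(\<Sum>i\<le>N. u i) \<le> C * (4 * (\<integral>w. (V w)\<^sup>2 \<partial>M)) + 8 * K" for N
  proof -
    have "(\<Sum>i\<le>N. u i) = C * (\<Sum>i\<le>N. (\<integral>w. (min ((V w)\<^sup>2) (2 ^ i))\<^sup>2 \<partial>M) / 2 ^ i)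
        + 8 * (\<Sum>i\<le>N. block_Gfun_sum i / 2 ^ i)"
      unfolding u_def by (simp add: sum.distrib sum_distrib_left sum_divide_distrib)
    also have "\<dots> \<le> C * (4 * (\<integral>w. (V w)\<^sup>2 \<partial>M)) + 8 * K"
      using C_nonneg expectation_min_sq_series_le K by (intro add_mono mult_left_mono) auto
    finally show ?thesis .
  qed
  then have u: "summable u"
    using u_nonneg by (intro bounded_imp_summable) auto
  have prob_le: "prob {w \<in> space M. 2 ^ i \<le> \<bar>block_sum i w - (\<integral>v. block_sum i v \<partial>M)\<bar>} \<le> u i" for i
  proof -
    have "prob {w \<in> space M. 2 ^ i \<le> \<bar>block_sum i w - (\<integral>v. block_sum i v \<partial>M)\<bar>}
        \<le> Cov M (block_sum i) (block_sum i) / (2 ^ i)\<^sup>2"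
      by (rule Chebyshev_inequality_Cov[OF _ abs_block_sum_le]) auto
    then show ?thesis
      using variance_block_sum_le[of i] unfolding u_def by (simp add: power2_pow2)
  qed
  show ?thesis
    by (rule summable_comparison_test'[OF u, of 0]) (simp add: prob_le)
qed

lemma block_sum_eventually_le:
  "AE w in M. eventually (\<lambda>i. block_sum i w \<le> 2 ^ i * (C * (\<integral>w. (V w)\<^sup>2 \<partial>M) + 1)) sequentially"
proof -
  define A where "A i = {w \<in> space M. 2 ^ i \<le> \<bar>block_sum i w - (\<integral>v. block_sum i v \<partial>M)\<bar>}" for i :: nat
  have [measurable]: "A i \<in> sets M" for i
    unfolding A_def by measurable
  have "AE w in M. eventually (\<lambda>i. w \<in> space M - A i) sequentially"
    using emeasure_finite summable_prob_block_sum_deviation unfolding A_def[symmetric]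
    by (intro borel_cantelli_AE1) (auto simp: less_top[symmetric])
  then show ?thesis
  proof (rule AE_mp, intro AE_I2 impI)
    fix w assume "eventually (\<lambda>i. w \<in> space M - A i) sequentially"
    then show "eventually (\<lambda>i. block_sum i w \<le> 2 ^ i * (C * (\<integral>w. (V w)\<^sup>2 \<partial>M) + 1)) sequentially"
    proof (rule eventually_mono)
      fix i assume "w \<in> space M - A i"
      then have "block_sum i w \<le> (\<integral>v. block_sum i v \<partial>M) + 2 ^ i"
        unfolding A_def by auto
      then show "block_sum i w \<le> 2 ^ i * (C * (\<integral>w. (V w)\<^sup>2 \<partial>M) + 1)"
        using expectation_block_sum_le[of i] by (simp add: algebra_simps)
    qed
  qed
qed

lemma U_sq_eventually_le: "AE w in M. eventually (\<lambda>j. (U j w)\<^sup>2 \<le> real j) sequentially"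
proof -
  define B where "B j = {w \<in> space M. sqrt (real j) < U j w}" for j :: nat
  have [measurable]: "B j \<in> sets M" for j
    unfolding B_def by measurable
  have V_less_iff: "sqrt (real j) < V w \<longleftrightarrow> real j < (V w)\<^sup>2" for j w
    using V_nonneg[of w] real_sqrt_less_iff[of "real j" "(V w)\<^sup>2"] by simp
  have "measure M (B j) \<le> C * prob {w \<in> space M. real j < (V w)\<^sup>2}" if "1 \<le> j" for j
    using dominated[OF that, of "sqrt (real j)"] that unfolding B_def V_less_iff by simp
  then have "(\<Sum>j = 1..n. measure M (B j)) \<le> (\<Sum>j = 1..n. C * prob {w \<in> space M. real j < (V w)\<^sup>2})" for n
    by (intro sum_mono) auto
  also have "\<dots> n \<le> C * (\<integral>w. (V w)\<^sup>2 \<partial>M)" for n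
    unfolding sum_distrib_left[symmetric] using C_nonneg V_square_integrable
    by (intro mult_left_mono sum_prob_greater_le_expectation) auto
  finally have "measure M (B 0) + (\<Sum>j = 1..n. measure M (B j)) \<le> 1 + C * (\<integral>w. (V w)\<^sup>2 \<partial>M)" for n
    by (intro add_mono) auto
  moreover have "{..n} = insert 0 {1..n}" for n :: nat
    by auto
  ultimately have "(\<Sum>j\<le>n. measure M (B j)) \<le> 1 + C * (\<integral>w. (V w)\<^sup>2 \<partial>M)" for n
    by simp
  then have "summable (\<lambda>j. measure M (B j))"
    by (intro bounded_imp_summable) auto
  then have "AE w in M. eventually (\<lambda>j. w \<in> space M - B j) sequentially"
    using emeasure_finite by (intro borel_cantelli_AE1) (auto simp: less_top[symmetric])
  then show ?thesis
  proof (rule AE_mp, intro AE_I2 impI)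
    fix w assume "w \<in> space M" "eventually (\<lambda>j. w \<in> space M - B j) sequentially"
    then show "eventually (\<lambda>j. (U j w)\<^sup>2 \<le> real j) sequentially"
      unfolding B_def using U_nonneg by (auto elim!: eventually_mono intro!: sqrt_ge_absD)
  qed
qed

lemma sum_U_sq_le_block_sum:
  assumes "\<forall>j\<ge>j0. (U j w)\<^sup>2 \<le> real j" "j0 \<le> n" "n \<le> 2 ^ i"
  shows "(\<Sum>j = 1..n. (U j w)\<^sup>2) \<le> (\<Sum>j = 1..j0. (U j w)\<^sup>2) + block_sum i w"
proof -
  have "{1..n} = {1..j0} \<union> {Suc j0..n}"
    using assms(2) by auto
  then have "(\<Sum>j = 1..n. (U j w)\<^sup>2) = (\<Sum>j = 1..j0. (U j w)\<^sup>2) + (\<Sum>j = Suc j0..n. (U j w)\<^sup>2)"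
    by (simp add: sum.union_disjoint)
  also have "(\<Sum>j = Suc j0..n. (U j w)\<^sup>2) = (\<Sum>j = Suc j0..n. trunc_sq i j w)"
  proof (rule sum.cong[OF refl], rule trunc_sq_eq[symmetric])
    fix j assume "j \<in> {Suc j0..n}"
    then have "(U j w)\<^sup>2 \<le> real j" "real j \<le> 2 ^ i"
      using assms(1,3) of_nat_mono[of j "2 ^ i"] by auto
    then show "(U j w)\<^sup>2 \<le> 2 ^ i"
      by linarith
  qed
  also have "\<dots> \<le> block_sum i w"
    unfolding block_sum_def using assms(3) trunc_sq_bounds(1) by (intro sum_mono2) auto
  finally show ?thesis
    by simp
qed

lemma sum_U_sq_le_beyond:
  assumes block: "\<And>i. i0 \<le> i \<Longrightarrow> block_sum i w \<le> 2 ^ i * K" and "0 \<le> K"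
    and U: "\<forall>j\<ge>j0. (U j w)\<^sup>2 \<le> real j" and n: "max (2 ^ i0) j0 < n"
  shows "(\<Sum>j = 1..n. (U j w)\<^sup>2) \<le> (\<Sum>j = 1..max (2 ^ i0) j0. (U j w)\<^sup>2) + 2 * real n * K"
proof -
  obtain i where i: "n \<le> 2 ^ i" "2 ^ i < 2 * n"
    using ex_pow2_between[of n] n by auto
  have "2 ^ i0 < (2::nat) ^ i"
    using n i(1) by linarith
  then have "i0 \<le> i"
    by (simp add: power_strict_increasing_iff less_imp_le)
  have "(\<Sum>j = 1..n. (U j w)\<^sup>2) \<le> (\<Sum>j = 1..j0. (U j w)\<^sup>2) + block_sum i w"
    using n U i(1) by (intro sum_U_sq_le_block_sum) auto
  also have "(\<Sum>j = 1..j0. (U j w)\<^sup>2) \<le> (\<Sum>j = 1..max (2 ^ i0) j0. (U j w)\<^sup>2)"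
    by (intro sum_mono2) auto
  also have "block_sum i w \<le> 2 ^ i * K"
    using block \<open>i0 \<le> i\<close> by blast
  also have "\<dots> \<le> 2 * real n * K"
  proof (rule mult_right_mono)
    show "(2::real) ^ i \<le> 2 * real n"
      using i(2) by (metis less_imp_le of_nat_le_iff of_nat_mult of_nat_numeral of_nat_power)
  qed (rule \<open>0 \<le> K\<close>)
  finally show ?thesis
    by simp
qed

lemma sum_U_sq_linear_bound: "AE w in M. \<exists>B. \<forall>n\<ge>1. (\<Sum>j = 1..n. (U j w)\<^sup>2) \<le> B * real n"
  using block_sum_eventually_le U_sq_eventually_le
proof eventually_elim
  case (elim w)
  define K where "K = C * (\<integral>w. (V w)\<^sup>2 \<partial>M) + 1"
  have "0 \<le> K"
    unfolding K_def using C_nonneg by simp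
  obtain i0 where i0: "\<And>i. i0 \<le> i \<Longrightarrow> block_sum i w \<le> 2 ^ i * K"
    using elim(1) unfolding K_def eventually_sequentially by blast
  obtain j0 where j0: "\<forall>j\<ge>j0. (U j w)\<^sup>2 \<le> real j"
    using elim(2) unfolding eventually_sequentially by blast
  define S where "S = (\<Sum>j = 1..max (2 ^ i0) j0. (U j w)\<^sup>2)"
  have "(\<Sum>j = 1..n. (U j w)\<^sup>2) \<le> (S + 2 * K) * real n" if "1 \<le> n" for n
  proof -
    have "S \<le> S * real n"
      unfolding S_def using that mult_left_mono[of 1 "real n"] by (simp add: sum_nonneg)
    moreover have "(\<Sum>j = 1..n. (U j w)\<^sup>2) \<le> S + 2 * real n * K"
    proof (cases "n \<le> max (2 ^ i0) j0")
      case True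
      then have "(\<Sum>j = 1..n. (U j w)\<^sup>2) \<le> S"
        unfolding S_def by (intro sum_mono2) auto
      then show ?thesis
        using \<open>0 \<le> K\<close> by (simp add: add_increasing2)
    next
      case False
      then show ?thesis
        unfolding S_def using i0 j0 \<open>0 \<le> K\<close> by (intro sum_U_sq_le_beyond) auto
    qed
    ultimately show ?thesis
      by (simp add: algebra_simps)
  qed
  then show ?case
    by blast
qed

end

context prob_space
begin

lemma PQD_upper_orthant:
  fixes X Y :: "'a \<Rightarrow> real"
  assumes [measurable]: "X \<in> borel_measurable M" "Y \<in> borel_measurable M"
    and PQD: "0 \<le> prob {w \<in> space M. X w \<le> s \<and> Y w \<le> r} - prob {w \<in> space M. X w \<le> s} * prob {w \<in> space M. Y w \<le> r}"
  shows "prob {w \<in> space M. s < X w} * prob {w \<in> space M. r < Y w} \<le> prob {w \<in> space M. s < X w \<and> r < Y w}"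
proof -
  define A where "A = {w \<in> space M. X w \<le> s}"
  define B where "B = {w \<in> space M. Y w \<le> r}"
  have [measurable]: "A \<in> sets M" "B \<in> sets M"
    unfolding A_def B_def by measurable
  have sets: "{w \<in> space M. s < X w \<and> r < Y w} = space M - (A \<union> B)"
    "{w \<in> space M. s < X w} = space M - A" "{w \<in> space M. r < Y w} = space M - B"
    "{w \<in> space M. X w \<le> s \<and> Y w \<le> r} = A \<inter> B"
    unfolding A_def B_def by auto
  have compl: "prob (space M - (A \<union> B)) = 1 - prob A - prob B + prob (A \<inter> B)"
    "prob (space M - A) = 1 - prob A" "prob (space M - B) = 1 - prob B"
    using prob_compl[of "A \<union> B"] measure_Un3[of A M B] prob_compl[of A] prob_compl[of B]
    by (simp_all add: fmeasurable_eq_sets)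
  show ?thesis
    using PQD unfolding sets compl A_def[symmetric] B_def[symmetric] by (simp add: algebra_simps)
qed

lemma tendsto_prob_le_less:
  fixes X Y :: "'a \<Rightarrow> real"
  assumes [measurable]: "X \<in> borel_measurable M" "Y \<in> borel_measurable M"
  shows "(\<lambda>n. prob {w \<in> space M. X w \<le> a - 1 / Suc n \<and> Y w \<le> b - 1 / Suc n})
    \<longlonglongrightarrow> prob {w \<in> space M. X w < a \<and> Y w < b}"
proof -
  define A where "A n = {w \<in> space M. X w \<le> a - 1 / Suc n \<and> Y w \<le> b - 1 / Suc n}" for n
  have "incseq A"
    unfolding A_def by (intro monoI) (auto simp: frac_le elim!: order_trans)
  moreover have "(\<Union>n. A n) = {w \<in> space M. X w < a \<and> Y w < b}"
  proof (intro equalityI subsetI)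
    fix w assume w: "w \<in> {w \<in> space M. X w < a \<and> Y w < b}"
    then obtain n where "1 / Suc n < min (a - X w) (b - Y w)"
      using reals_Archimedean[of "min (a - X w) (b - Y w)"] by (auto simp: inverse_eq_divide)
    then have "w \<in> A n"
      using w unfolding A_def by auto
    then show "w \<in> (\<Union>n. A n)"
      by blast
  qed (auto simp: A_def order.strict_trans1[of _ _ a] order.strict_trans1[of _ _ b])
  moreover have "range A \<subseteq> sets M"
    unfolding A_def by auto
  ultimately show ?thesis
    using finite_Lim_measure_incseq[of A] unfolding A_def by simp
qed

lemma PQD_lower_strict:
  fixes X Y :: "'a \<Rightarrow> real"
  assumes [measurable]: "X \<in> borel_measurable M" "Y \<in> borel_measurable M"
    and PQD: "\<And>a b. 0 \<le> prob {w \<in> space M. X w \<le> a \<and> Y w \<le> b}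
      - prob {w \<in> space M. X w \<le> a} * prob {w \<in> space M. Y w \<le> b}"
  shows "prob {w \<in> space M. X w < a} * prob {w \<in> space M. Y w < b} \<le> prob {w \<in> space M. X w < a \<and> Y w < b}"
proof (rule tendsto_le[OF sequentially_bot])
  show "(\<lambda>n. prob {w \<in> space M. X w \<le> a - 1 / Suc n \<and> Y w \<le> b - 1 / Suc n})
    \<longlonglongrightarrow> prob {w \<in> space M. X w < a \<and> Y w < b}"
    by (rule tendsto_prob_le_less) simp_all
  show "(\<lambda>n. prob {w \<in> space M. X w \<le> a - 1 / Suc n} * prob {w \<in> space M. Y w \<le> b - 1 / Suc n})
    \<longlonglongrightarrow> prob {w \<in> space M. X w < a} * prob {w \<in> space M. Y w < b}"
    using tendsto_prob_le_less[of X X a a] tendsto_prob_le_less[of Y Y b b] by (intro tendsto_mult) simp_all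
  show "\<forall>\<^sub>F n in sequentially. prob {w \<in> space M. X w \<le> a - 1 / Suc n} * prob {w \<in> space M. Y w \<le> b - 1 / Suc n}
    \<le> prob {w \<in> space M. X w \<le> a - 1 / Suc n \<and> Y w \<le> b - 1 / Suc n}"
    using PQD by simp
qed

lemma upper_PQD_nonnegI:
  fixes X Y :: "'a \<Rightarrow> real"
  assumes "\<And>w. 0 \<le> X w" "\<And>w. 0 \<le> Y w"
    and "\<And>s r. 0 \<le> s \<Longrightarrow> 0 \<le> r \<Longrightarrow>
      prob {w \<in> space M. s < X w} * prob {w \<in> space M. r < Y w} \<le> prob {w \<in> space M. s < X w \<and> r < Y w}"
  shows "upper_PQD M X Y"
  unfolding upper_PQD_def
proof (intro allI)
  fix s r :: real
  consider "s < 0" | "r < 0" | "0 \<le> s" "0 \<le> r"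
    by linarith
  then show "prob {w \<in> space M. s < X w} * prob {w \<in> space M. r < Y w} \<le> prob {w \<in> space M. s < X w \<and> r < Y w}"
  proof cases
    case 1
    then have "{w \<in> space M. s < X w} = space M" "{w \<in> space M. s < X w \<and> r < Y w} = {w \<in> space M. r < Y w}"
      using assms(1) less_le_trans by blast+
    then show ?thesis
      by (simp add: prob_space)
  next
    case 2
    then have "{w \<in> space M. r < Y w} = space M" "{w \<in> space M. s < X w \<and> r < Y w} = {w \<in> space M. s < X w}"
      using assms(2) less_le_trans by blast+
    then show ?thesis
      by (simp add: prob_space)
  qed (rule assms(3))
qed

lemma upper_PQD_pos_part:
  fixes X Y :: "'a \<Rightarrow> real"
  assumes [measurable]: "X \<in> borel_measurable M" "Y \<in> borel_measurable M"
    and PQD: "\<And>a b. 0 \<le> prob {w \<in> space M. X w \<le> a \<and> Y w \<le> b}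
      - prob {w \<in> space M. X w \<le> a} * prob {w \<in> space M. Y w \<le> b}"
  shows "upper_PQD M (\<lambda>w. pos_part (X w)) (\<lambda>w. pos_part (Y w))"
proof (rule upper_PQD_nonnegI)
  fix s r :: real assume "0 \<le> s" "0 \<le> r"
  then have "s < pos_part z \<longleftrightarrow> s < z" "r < pos_part z \<longleftrightarrow> r < z" for z
    unfolding pos_part_def by auto
  then show "prob {w \<in> space M. s < pos_part (X w)} * prob {w \<in> space M. r < pos_part (Y w)}
      \<le> prob {w \<in> space M. s < pos_part (X w) \<and> r < pos_part (Y w)}"
    using PQD_upper_orthant[OF assms(1,2) PQD] by simp
qed (simp_all add: pos_part_def)

lemma upper_PQD_neg_part:
  fixes X Y :: "'a \<Rightarrow> real"
  assumes [measurable]: "X \<in> borel_measurable M" "Y \<in> borel_measurable M"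
    and PQD: "\<And>a b. 0 \<le> prob {w \<in> space M. X w \<le> a \<and> Y w \<le> b}
      - prob {w \<in> space M. X w \<le> a} * prob {w \<in> space M. Y w \<le> b}"
  shows "upper_PQD M (\<lambda>w. neg_part (X w)) (\<lambda>w. neg_part (Y w))"
proof (rule upper_PQD_nonnegI)
  fix s r :: real assume "0 \<le> s" "0 \<le> r"
  then have "s < neg_part z \<longleftrightarrow> z < - s" "r < neg_part z \<longleftrightarrow> z < - r" for z
    unfolding neg_part_def by auto
  then show "prob {w \<in> space M. s < neg_part (X w)} * prob {w \<in> space M. r < neg_part (Y w)}
      \<le> prob {w \<in> space M. s < neg_part (X w) \<and> r < neg_part (Y w)}"
    using PQD_lower_strict[OF assms(1,2) PQD] by simp
qed (simp_all add: neg_part_def)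

end

lemma measurable_pos_part [measurable]: "f \<in> borel_measurable M \<Longrightarrow> (\<lambda>w. pos_part (f w)) \<in> borel_measurable M"
  unfolding pos_part_def by measurable

lemma measurable_neg_part [measurable]: "f \<in> borel_measurable M \<Longrightarrow> (\<lambda>w. neg_part (f w)) \<in> borel_measurable M"
  unfolding neg_part_def by measurable

lemma pos_part_nonneg: "0 \<le> pos_part z" and pos_part_le_abs: "pos_part z \<le> \<bar>z\<bar>"
  and neg_part_nonneg: "0 \<le> neg_part z" and neg_part_le_abs: "neg_part z \<le> \<bar>z\<bar>"
  unfolding pos_part_def neg_part_def by auto

lemma (in prob_space) Gfun_nonneg_if_upper_PQD:
  assumes "X \<in> borel_measurable M" "Y \<in> borel_measurable M" "\<And>w. 0 \<le> X w" "\<And>w. 0 \<le> Y w"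
    and "upper_PQD M X Y" "0 \<le> T"
  shows "0 \<le> Gfun M X Y T"
proof -
  interpret nonneg_upper_PQD M X Y
    using assms by unfold_locales
  show ?thesis
    using assms Cov_min_nonneg by (simp add: Gfun_eq_Cov_min)
qed

lemma Gfun_series_mono:
  fixes F G :: "nat \<Rightarrow> nat \<Rightarrow> real \<Rightarrow> real"
  assumes "\<And>k j t. 1 \<le> k \<Longrightarrow> k < j \<Longrightarrow> real j \<le> t \<Longrightarrow> F k j t \<le> G k j t"
  shows "(\<Sum>j. \<Sum>k\<in>{1..<j}. \<integral>\<^sup>+ t\<in>{real j..}. ennreal (t powr (-2) * F k j t) \<partial>lborel)
    \<le> (\<Sum>j. \<Sum>k\<in>{1..<j}. \<integral>\<^sup>+ t\<in>{real j..}. ennreal (t powr (-2) * G k j t) \<partial>lborel)"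
  using assms
  by (intro suminf_le summableI sum_mono nn_integral_mono)
    (auto simp: indicator_def intro!: ennreal_leI mult_left_mono)

context prob_space
begin

lemma upper_PQD_parts:
  assumes [measurable]: "\<And>k. e k \<in> borel_measurable M" and "pairwise_PQD M e" "1 \<le> k" "k < j"
  shows "upper_PQD M (\<lambda>w. pos_part (e k w)) (\<lambda>w. pos_part (e j w))"
    and "upper_PQD M (\<lambda>w. neg_part (e k w)) (\<lambda>w. neg_part (e j w))"
  using assms(2-) unfolding pairwise_PQD_def
  by (auto intro!: upper_PQD_pos_part upper_PQD_neg_part)

lemma dominated_upper_PQD_seqI:
  assumes [measurable]: "\<And>j. U j \<in> borel_measurable M" "\<epsilon> \<in> borel_measurable M"
    and "\<And>j w. 0 \<le> U j w" "\<And>j w. U j w \<le> \<bar>e j w\<bar>"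
    and dom: "\<And>j t. 1 \<le> j \<Longrightarrow> 0 < t \<Longrightarrow> prob {w \<in> space M. t < \<bar>e j w\<bar>} \<le> C * prob {w \<in> space M. t < \<bar>\<epsilon> w\<bar>}"
    and [measurable]: "\<And>j. e j \<in> borel_measurable M"
    and "integrable M (\<lambda>w. (\<epsilon> w)\<^sup>2)" "0 \<le> C"
    and "\<And>k j. 1 \<le> k \<Longrightarrow> k < j \<Longrightarrow> upper_PQD M (U k) (U j)"
    and "(\<Sum>j. \<Sum>k\<in>{1..<j}. \<integral>\<^sup>+ t\<in>{real j..}.
      ennreal (t powr (-2) * Gfun M (U k) (U j) (sqrt t)) \<partial>lborel) < \<infinity>"
  shows "dominated_upper_PQD_seq M U (\<lambda>w. \<bar>\<epsilon> w\<bar>) C"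
proof unfold_locales
  fix j :: nat and t :: real assume "1 \<le> j" "0 < t"
  have "prob {w \<in> space M. t < U j w} \<le> prob {w \<in> space M. t < \<bar>e j w\<bar>}"
    using assms(4) by (intro finite_measure_mono) (auto intro: less_le_trans)
  also have "\<dots> \<le> C * prob {w \<in> space M. t < \<bar>\<epsilon> w\<bar>}"
    using dom \<open>1 \<le> j\<close> \<open>0 < t\<close> .
  finally show "prob {w \<in> space M. t < U j w} \<le> C * prob {w \<in> space M. t < \<bar>\<epsilon> w\<bar>}" .
qed (use assms in auto)

lemma dominated_upper_PQD_seq_parts:
  assumes e_rv: "\<And>k. e k \<in> borel_measurable M" and eps_rv: "\<epsilon> \<in> borel_measurable M"
    and PQD: "pairwise_PQD M e"
    and dom: "\<And>j t. 1 \<le> j \<Longrightarrow> 0 < t \<Longrightarrow> prob {w \<in> space M. t < \<bar>e j w\<bar>} \<le> C * prob {w \<in> space M. t < \<bar>\<epsilon> w\<bar>}"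
    and "0 \<le> C" and second_moment: "integrable M (\<lambda>w. (\<epsilon> w)\<^sup>2)"
    and covsum: "(\<Sum>j. \<Sum>k\<in>{1..<j}.
        \<integral>\<^sup>+ t\<in>{real j..}. ennreal (t powr (-2) *
          (Gfun M (\<lambda>w. pos_part (e k w)) (\<lambda>w. pos_part (e j w)) (sqrt t)
           + Gfun M (\<lambda>w. neg_part (e k w)) (\<lambda>w. neg_part (e j w)) (sqrt t))) \<partial>lborel) < \<infinity>"
  shows "dominated_upper_PQD_seq M (\<lambda>j w. pos_part (e j w)) (\<lambda>w. \<bar>\<epsilon> w\<bar>) C"
    and "dominated_upper_PQD_seq M (\<lambda>j w. neg_part (e j w)) (\<lambda>w. \<bar>\<epsilon> w\<bar>) C"
proof -
  note upper = upper_PQD_parts[OF e_rv PQD]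
  have Gfun_nonneg: "0 \<le> Gfun M (\<lambda>w. pos_part (e k w)) (\<lambda>w. pos_part (e j w)) (sqrt t)"
    "0 \<le> Gfun M (\<lambda>w. neg_part (e k w)) (\<lambda>w. neg_part (e j w)) (sqrt t)"
    if "1 \<le> k" "k < j" "real j \<le> t" for k j t
    using that upper[OF that(1,2)]
    by (auto intro!: Gfun_nonneg_if_upper_PQD measurable_pos_part[OF e_rv] measurable_neg_part[OF e_rv]
        pos_part_nonneg neg_part_nonneg)
  have "(\<Sum>j. \<Sum>k\<in>{1..<j}. \<integral>\<^sup>+ t\<in>{real j..}. ennreal (t powr (-2) *
      Gfun M (\<lambda>w. pos_part (e k w)) (\<lambda>w. pos_part (e j w)) (sqrt t)) \<partial>lborel) < \<infinity>"
    by (rule le_less_trans[OF Gfun_series_mono covsum]) (simp add: Gfun_nonneg)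
  then show "dominated_upper_PQD_seq M (\<lambda>j w. pos_part (e j w)) (\<lambda>w. \<bar>\<epsilon> w\<bar>) C"
    using e_rv eps_rv dom second_moment \<open>0 \<le> C\<close> upper(1)
    by (intro dominated_upper_PQD_seqI[where e=e] pos_part_nonneg pos_part_le_abs) auto
  have "(\<Sum>j. \<Sum>k\<in>{1..<j}. \<integral>\<^sup>+ t\<in>{real j..}. ennreal (t powr (-2) *
      Gfun M (\<lambda>w. neg_part (e k w)) (\<lambda>w. neg_part (e j w)) (sqrt t)) \<partial>lborel) < \<infinity>"
    by (rule le_less_trans[OF Gfun_series_mono covsum]) (simp add: Gfun_nonneg)
  then show "dominated_upper_PQD_seq M (\<lambda>j w. neg_part (e j w)) (\<lambda>w. \<bar>\<epsilon> w\<bar>) C"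
    using e_rv eps_rv dom second_moment \<open>0 \<le> C\<close> upper(2)
    by (intro dominated_upper_PQD_seqI[where e=e] neg_part_nonneg neg_part_le_abs) auto
qed

end

lemma sum_sq_le_linear_of_parts:
  assumes "\<forall>n\<ge>1. (\<Sum>j = 1..n. (pos_part (e j w))\<^sup>2) \<le> B1 * real n"
    and "\<forall>n\<ge>1. (\<Sum>j = 1..n. (neg_part (e j w))\<^sup>2) \<le> B2 * real n"
  shows "\<forall>n\<ge>1. (\<Sum>j = 1..n. (e j w)\<^sup>2) \<le> (B1 + B2) * real n"
proof (intro allI impI)
  fix n :: nat assume "1 \<le> n"
  have "z\<^sup>2 = (pos_part z)\<^sup>2 + (neg_part z)\<^sup>2" for z :: real
    unfolding pos_part_def neg_part_def by (cases "0 \<le> z") (auto simp: max_def)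
  then have "(\<Sum>j = 1..n. (e j w)\<^sup>2) = (\<Sum>j = 1..n. (pos_part (e j w))\<^sup>2) + (\<Sum>j = 1..n. (neg_part (e j w))\<^sup>2)"
    unfolding sum.distrib[symmetric] by (intro sum.cong refl)
  also have "\<dots> \<le> B1 * real n + B2 * real n"
    using assms \<open>1 \<le> n\<close> by (intro add_mono) auto
  finally show "(\<Sum>j = 1..n. (e j w)\<^sup>2) \<le> (B1 + B2) * real n"
    by (simp add: distrib_right)
qed

theorem theorem6:
  fixes M :: "'a measure"
    and x e y :: "nat \<Rightarrow> 'a \<Rightarrow> real"
    and \<epsilon> :: "'a \<Rightarrow> real"
    and \<beta> :: real
  assumes "prob_space M"
    and x_rv: "\<And>k. x k \<in> borel_measurable M"
    and e_rv: "\<And>k. e k \<in> borel_measurable M"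
    and eps_rv: "\<epsilon> \<in> borel_measurable M"
    and model: "\<And>k w. y k w = \<beta> * x k w + e k w"
    and PQD: "pairwise_PQD M e"
    and dom: "stoch_dominated M e \<epsilon>"
    and second_moment: "integrable M (\<lambda>w. (\<epsilon> w)\<^sup>2)"
    and covsum: "(\<Sum>j. \<Sum>k\<in>{1..<j}.
        \<integral>\<^sup>+ t\<in>{real j..}. ennreal (t powr (-2) *
          (Gfun M (\<lambda>w. pos_part (e k w)) (\<lambda>w. pos_part (e j w)) (sqrt t)
           + Gfun M (\<lambda>w. neg_part (e k w)) (\<lambda>w. neg_part (e j w)) (sqrt t))) \<partial>lborel) < \<infinity>"
    and nonzero: "\<exists>n\<ge>1. AE w in M. Sxx x n w \<noteq> 0"
    and growth: "AE w in M. (\<lambda>n. inverse (Sxx x n w)) \<in> o(\<lambda>n. inverse (real n))"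
  shows "AE w in M. (\<lambda>n. gamma_hat x y n w) \<longlonglongrightarrow> \<beta>"
proof -
  interpret prob_space M by fact
  obtain C where "0 < C" and dom_C: "\<And>j t. 1 \<le> j \<Longrightarrow> 0 < t \<Longrightarrow>
      prob {w \<in> space M. t < \<bar>e j w\<bar>} \<le> C * prob {w \<in> space M. t < \<bar>\<epsilon> w\<bar>}"
    using dom unfolding stoch_dominated_def by blast
  note parts = dominated_upper_PQD_seq_parts[OF e_rv eps_rv PQD dom_C less_imp_le[OF \<open>0 < C\<close>] second_moment covsum]
  interpret pos: dominated_upper_PQD_seq M "\<lambda>j w. pos_part (e j w)" "\<lambda>w. \<bar>\<epsilon> w\<bar>" C
    by (rule parts(1))
  interpret neg: dominated_upper_PQD_seq M "\<lambda>j w. neg_part (e j w)" "\<lambda>w. \<bar>\<epsilon> w\<bar>" C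
    by (rule parts(2))
  have "AE w in M. \<exists>B. \<forall>n\<ge>1. (\<Sum>j = 1..n. (e j w)\<^sup>2) \<le> B * real n"
    using pos.sum_U_sq_linear_bound neg.sum_U_sq_linear_bound
    by eventually_elim (blast dest: sum_sq_le_linear_of_parts)
  moreover obtain n0 where "AE w in M. Sxx x n0 w \<noteq> 0"
    using nonzero by blast
  ultimately show ?thesis
    using growth
  proof eventually_elim
    case (elim w)
    then obtain B where "\<forall>n\<ge>1. (\<Sum>j = 1..n. (e j w)\<^sup>2) \<le> B * real n"
      by blast
    then show ?case
      using elim(2,3) model by (intro gamma_hat_tendsto[where e=e and B=B and m=n0]) auto
  qed
qed

end
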